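(* Let $n\ge4$. Then, as $S_n$-modules under conjugation and as algebras: (1) $\mathrm{EI}_n\cong\{n\}\oplus\{n-1,1\}$ is a matrix algebra (closed under matrix multiplication); (2) $\mathrm{DS}_n\cong\{n\}\oplus\{n-1,1\}\oplus\{n-2,2\}\oplus\{n-2,1^2\}$ is a matrix algebra; (3) $\mathrm{Symm}_n\cong\{n\}\oplus\{n-1,1\}\oplus\{n-2,2\}$ is a Jordan algebra but not a Lie algebra; (4) $\mathrm{Anti}_n\cong\{n-2,1^2\}$ is a Lie algebra but not a Jordan algebra; (5) the subspace sum $\mathrm{EI}_n+\mathrm{Symm}_n\cong\{n\}\oplus2\{n-1,1\}\oplus\{n-2,2\}$ is a Jordan algebra but not a Lie algebra.
   Context: Let $\mathbf{1}\in\mathbb{R}^n$ be the all-ones column vector and $\mathcal{L}_n=\{Q\in \mathrm{Mat}_n(\mathbb{R}): Q\mathbf{1}=0\}$. $R_i\in\mathcal{L}_n$ is the matrix whose off-diagonal entries in column $i$ are $1$, all other off-diagonal entries $0$, diagonal determined by zero row sums. $\mathrm{EI}_n:=\operatorname{span}_{\mathbb{R}}(R_1,\dots,R_n)$. $\mathrm{DS}_n:=\{Q\in\mathcal{L}_n:\mathbf{1}^TQ=0\}$ (zero row and column sums), which equals $\operatorname{span}_{\mathbb{R}}(K_\sigma-I_n:\sigma\in S_n)$. $\mathrm{Symm}_n$ and $\mathrm{Anti}_n$ are the symmetric and antisymmetric matrices in $\mathrm{DS}_n$ respectively (equivalently, symmetric resp. antisymmetric matrices in $\mathcal{L}_n$).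 For $\sigma\in S_n$, $K_\sigma$ is the permutation matrix with $e_iK_\sigma=e_{\sigma(i)}$; $S_n$ acts by $\sigma\cdot X=K_\sigma^TXK_\sigma$. $\{\lambda\}$ denotes the irreducible real $S_n$-module labelled by the partition $\lambda$. A subspace is a Jordan algebra if closed under $AB+BA$, a Lie algebra if closed under $AB-BA$. *)

theory Defs
  imports "HOL-Analysis.Analysis"
begin

definition onesv :: "real^'n" where
  "onesv = (\<chi> i. 1)"

definition Lmat :: "(real^'n^'n) set" where
  "Lmat = {Q. Q *v onesv = 0}"

text \<open>R_i: off-diagonal entries of column i are 1, other off-diagonal entries 0,
  diagonal chosen so that every row sum is zero.\<close>
definition Rmat :: "'n \<Rightarrow> real^'n^'n" where
  "Rmat i = (\<chi> a b. if a = b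
                     then - (\<Sum>c\<in>UNIV - {a}. if c = i then 1 else 0)
                     else (if b = i then 1 else 0))"

definition EI :: "(real^'n^'n) set" where
  "EI = span (range Rmat)"

definition DS :: "(real^'n^'n) set" where
  "DS = {Q \<in> Lmat. onesv v* Q = 0}"

definition Symm :: "(real^'n^'n) set" where
  "Symm = {Q \<in> DS. transpose Q = Q}"

definition Anti :: "(real^'n^'n) set" where
  "Anti = {Q \<in> DS. transpose Q = - Q}"

definition setsum_sp :: "(real^'n^'n) set \<Rightarrow> (real^'n^'n) set \<Rightarrow> (real^'n^'n) set" where
  "setsum_sp U W = {A + B | A B. A \<in> U \<and> B \<in> W}"

definition mat_algebra :: "(real^'n^'n) set \<Rightarrow> bool" where
  "mat_algebra V \<longleftrightarrow> (\<forall>A\<in>V. \<forall>B\<in>V. A ** B \<in> V)"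

definition jordan_alg :: "(real^'n^'n) set \<Rightarrow> bool" where
  "jordan_alg V \<longleftrightarrow> (\<forall>A\<in>V. \<forall>B\<in>V. A ** B + B ** A \<in> V)"

definition lie_alg :: "(real^'n^'n) set \<Rightarrow> bool" where
  "lie_alg V \<longleftrightarrow> (\<forall>A\<in>V. \<forall>B\<in>V. A ** B - B ** A \<in> V)"

text \<open>Permutation matrix with e_i K_sigma = e_(sigma i), i.e. row i is e_(sigma i).\<close>
definition Kperm :: "('n \<Rightarrow> 'n) \<Rightarrow> real^'n^'n" where
  "Kperm \<sigma> = (\<chi> i j. if j = \<sigma> i then 1 else 0)"

definition conj_act :: "('n \<Rightarrow> 'n) \<Rightarrow> real^'n^'n \<Rightarrow> real^'n^'n" where
  "conj_act \<sigma> X = transpose (Kperm \<sigma>) ** X ** Kperm \<sigma>"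

text \<open>A partition is a list of row lengths. Cells of the Young diagram: (row, column).\<close>
definition cells :: "nat list \<Rightarrow> (nat \<times> nat) set" where
  "cells lam = {(i, j). i < length lam \<and> j < lam ! i}"

definition tableaux :: "nat list \<Rightarrow> ('n \<Rightarrow> nat \<times> nat) set" where
  "tableaux lam = {t. bij_betw t UNIV (cells lam)}"

text \<open>A tabloid is represented by the row function (which row each entry lies in).\<close>
definition tabloid_of :: "('n \<Rightarrow> nat \<times> nat) \<Rightarrow> ('n \<Rightarrow> nat)" where
  "tabloid_of t = fst \<circ> t"

definition col_stab :: "('n \<Rightarrow> nat \<times> nat) \<Rightarrow> ('n \<Rightarrow> 'n) set" where
  "col_stab t = {\<pi>. \<pi> permutes UNIV \<and> (\<forall>x. snd (t (\<pi> x)) = snd (t x))}"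

text \<open>Polytabloid e_t = sum over column stabiliser of sign(pi) {pi t}, where the
  tableau pi t places pi(x) in the cell of x, i.e. pi t = t o inv pi.
  Elements of the permutation module M^lam are real functions on tabloids.\<close>
definition polytabloid :: "('n \<Rightarrow> nat \<times> nat) \<Rightarrow> (('n \<Rightarrow> nat) \<Rightarrow> real)" where
  "polytabloid t = (\<lambda>r. \<Sum>\<pi>\<in>col_stab t.
       if tabloid_of (t \<circ> inv \<pi>) = r then of_int (sign \<pi>) else 0)"

definition specht :: "nat list \<Rightarrow> (('n \<Rightarrow> nat) \<Rightarrow> real) set" where
  "specht lam = {v. \<exists>c. v = (\<lambda>r. \<Sum>t\<in>(tableaux lam :: ('n \<Rightarrow> nat \<times> nat) set). c t * polytabloid t r)}"

text \<open>Action on M^lam: (sigma f)(r) = f(sigma^-1 r), where sigma r = r o inv sigma.\<close>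
definition tab_act :: "('n \<Rightarrow> 'n) \<Rightarrow> (('n \<Rightarrow> nat) \<Rightarrow> real) \<Rightarrow> (('n \<Rightarrow> nat) \<Rightarrow> real)" where
  "tab_act \<sigma> f = (\<lambda>r. f (r \<circ> \<sigma>))"

definition spechtIso :: "(real^'n^'n) set \<Rightarrow> nat list \<Rightarrow> bool" where
  "spechtIso W lam \<longleftrightarrow>
     subspace W \<and>
     (\<forall>\<sigma>. \<sigma> permutes UNIV \<longrightarrow> (\<forall>X\<in>W. conj_act \<sigma> X \<in> W)) \<and>
     (\<exists>f. bij_betw f W (specht lam :: (('n \<Rightarrow> nat) \<Rightarrow> real) set) \<and>
          (\<forall>X\<in>W. \<forall>Y\<in>W. f (X + Y) = (\<lambda>r. f X r + f Y r)) \<and>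
          (\<forall>c. \<forall>X\<in>W. f (c *\<^sub>R X) = (\<lambda>r. c * f X r)) \<and>
          (\<forall>\<sigma>. \<sigma> permutes UNIV \<longrightarrow> (\<forall>X\<in>W. f (conj_act \<sigma> X) = tab_act \<sigma> (f X))))"

text \<open>V is isomorphic to the direct sum of the Specht modules in the list lams
  (with multiplicity): V is the internal direct sum of invariant subspaces W_i with
  W_i isomorphic to {lams ! i}.\<close>
definition isoDecomp :: "(real^'n^'n) set \<Rightarrow> nat list list \<Rightarrow> bool" where
  "isoDecomp V lams \<longleftrightarrow>
     subspace V \<and>
     (\<exists>Ws. length Ws = length lams \<and>
        (\<forall>i<length lams. spechtIso (Ws ! i) (lams ! i)) \<and>
        V = {\<Sum>i<length lams. vs i | vs. \<forall>i<length lams. vs i \<in> Ws ! i} \<and>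
        (\<forall>vs. (\<forall>i<length lams. vs i \<in> Ws ! i) \<and> (\<Sum>i<length lams. vs i) = 0
               \<longrightarrow> (\<forall>i<length lams. vs i = 0)))"

end

theory Submission
  imports Defs
begin

text \<open>
  Each irreducible constituent is realised by an explicit \<open>S\<^sub>n\<close>-invariant space of matrices:
  the multiples of \<open>J - nI\<close> for \<open>{n}\<close>; for the two copies of \<open>{n-1,1}\<close> the matrices
  \<open>(u\<^sub>j)\<^sub>i\<^sub>,\<^sub>j\<close> with constant columns and the symmetric matrices \<open>n diag(u) - (u\<^sub>i + u\<^sub>j)\<^sub>i\<^sub>,\<^sub>j\<close>,
  where \<open>\<Sum> u = 0\<close>; the symmetric matrices with zero diagonal for \<open>{n-2,2}\<close>; and \<open>Anti\<^sub>n\<close> itself for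
  \<open>{n-2,1\<^sup>2}\<close>. Reading a matrix off on the tabloids is an injective equivariant linear map into
  the permutation module, and every polytabloid is the image of an explicit matrix of the space:
  \<open>e\<^sub>a - e\<^sub>b\<close>, an alternating 4-cycle \<open>S\<^sub>a\<^sub>b - S\<^sub>b\<^sub>c + S\<^sub>c\<^sub>d - S\<^sub>d\<^sub>a\<close>, or an oriented triangle
  \<open>A\<^sub>a\<^sub>b + A\<^sub>b\<^sub>c + A\<^sub>c\<^sub>a\<close>; these matrices span the space. The sums are direct by comparing
  traces, diagonals and (anti)symmetry.

  \<open>DS\<^sub>n\<close> is closed under products because row and column sums are, and on \<open>EI\<^sub>n\<close> one has
  \<open>R\<^sub>v R\<^sub>w = -(\<Sum> w) R\<^sub>v\<close> for \<open>R\<^sub>v = \<Sum> v\<^sub>i R\<^sub>i\<close>. An element of \<open>EI\<^sub>n + Symm\<^sub>n\<close> is \<open>\<one> u\<^sup>T + S\<close> with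
  \<open>S\<close> symmetric; \<open>\<one> u\<^sup>T\<close> is killed from the left by every zero-row-sum matrix, whence Jordan
  closure, while \<open>M\<^sub>p\<^sub>q - M\<^sub>q\<^sub>p + M\<^sub>q\<^sub>r - M\<^sub>r\<^sub>q + M\<^sub>r\<^sub>p - M\<^sub>p\<^sub>r\<close> vanishes on \<open>EI\<^sub>n + Symm\<^sub>n\<close> but not
  on the commutator of \<open>(e\<^sub>p - e\<^sub>q)(e\<^sub>p - e\<^sub>q)\<^sup>T\<close> and \<open>(e\<^sub>q - e\<^sub>r)(e\<^sub>q - e\<^sub>r)\<^sup>T\<close>.
\<close>

text \<open>The name \<open>transpose\<close> is taken by the matrix transpose.\<close>

abbreviation swap_perm :: "'a \<Rightarrow> 'a \<Rightarrow> 'a \<Rightarrow> 'a" where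
  "swap_perm \<equiv> Transposition.transpose"

lemma matrix_mult_entry: "(A ** B) $ i $ j = (\<Sum>k\<in>UNIV. A $ i $ k * B $ k $ j)"
  by (simp add: matrix_matrix_mult_def)

lemma transpose_entry: "transpose A $ i $ j = A $ j $ i"
  by (simp add: transpose_def)

lemma Lmat_iff: "X \<in> Lmat \<longleftrightarrow> (\<forall>i. (\<Sum>j\<in>UNIV. X $ i $ j) = 0)"
  by (simp add: Lmat_def matrix_vector_mult_def onesv_def vec_eq_iff)

lemma DS_iff:
  "X \<in> DS \<longleftrightarrow> (\<forall>i. (\<Sum>j\<in>UNIV. X $ i $ j) = 0) \<and> (\<forall>j. (\<Sum>i\<in>UNIV. X $ i $ j) = 0)"
  by (simp add: DS_def Lmat_iff vector_matrix_mult_def onesv_def vec_eq_iff)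

lemma Symm_iff: "X \<in> Symm \<longleftrightarrow> (\<forall>i. (\<Sum>j\<in>UNIV. X $ i $ j) = 0) \<and> (\<forall>i j. X $ i $ j = X $ j $ i)"
proof -
  have cols: "(\<Sum>i\<in>UNIV. X $ i $ j) = 0"
    if "\<forall>i j. X $ i $ j = X $ j $ i" "\<forall>i. (\<Sum>j\<in>UNIV. X $ i $ j) = 0" for j
  proof -
    have "(\<Sum>i\<in>UNIV. X $ i $ j) = (\<Sum>i\<in>UNIV. X $ j $ i)" using that(1) by (intro sum.cong) blast+
    then show ?thesis using that(2) by simp
  qed
  show ?thesis
    unfolding Symm_def DS_iff vec_eq_iff transpose_entry using cols by blast
qed

lemma Anti_iff:
  "X \<in> Anti \<longleftrightarrow> (\<forall>i. (\<Sum>j\<in>UNIV. X $ i $ j) = 0) \<and> (\<forall>i j. X $ i $ j = - X $ j $ i)"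
proof -
  have cols: "(\<Sum>i\<in>UNIV. X $ i $ j) = 0"
    if "\<forall>i j. X $ i $ j = - X $ j $ i" "\<forall>i. (\<Sum>j\<in>UNIV. X $ i $ j) = 0" for j
  proof -
    have "(\<Sum>i\<in>UNIV. X $ i $ j) = (\<Sum>i\<in>UNIV. - X $ j $ i)" using that(1) by (intro sum.cong) blast+
    then show ?thesis using that(2) by (simp add: sum_negf)
  qed
  show ?thesis
    unfolding Anti_def DS_iff vec_eq_iff transpose_entry vector_uminus_component using cols by blast
qed

lemma SymmD:
  assumes "X \<in> Symm"
  shows "(\<Sum>j\<in>UNIV. X $ i $ j) = 0" "X $ i $ j = X $ j $ i"
  using assms unfolding Symm_iff by blast+

lemma AntiD:
  assumes "X \<in> Anti"
  shows "(\<Sum>j\<in>UNIV. X $ i $ j) = 0" "X $ i $ j = - X $ j $ i" "X $ i $ i = 0"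
proof -
  show "(\<Sum>j\<in>UNIV. X $ i $ j) = 0" "X $ i $ j = - X $ j $ i" for i j
    using assms unfolding Anti_iff by blast+
  from this(2)[of i i] show "X $ i $ i = 0" by simp
qed

lemma Symm_imp_DS: "X \<in> Symm \<Longrightarrow> X \<in> DS"
  by (simp add: Symm_def)

lemma Anti_imp_DS: "X \<in> Anti \<Longrightarrow> X \<in> DS"
  by (simp add: Anti_def)

lemma subspace_DS: "subspace DS"
  by (auto simp: subspace_def DS_iff sum.distrib sum_distrib_left[symmetric])

lemma transpose_zero_add_diff:
  "transpose (0 :: real^'n^'n) = 0" "transpose (A + B) = transpose A + transpose B"
  "transpose (A - B) = transpose A - transpose B"
  by (simp_all add: vec_eq_iff transpose_entry)

lemma subspace_Symm: "subspace Symm"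
  using subspace_DS
  by (auto simp: subspace_def Symm_def transpose_zero_add_diff transpose_scalar)

lemma subspace_Anti: "subspace Anti"
  using subspace_DS
  by (auto simp: subspace_def Anti_def transpose_zero_add_diff transpose_scalar)

lemma Symm_Int_Anti:
  assumes "X \<in> Symm" "X \<in> Anti"
  shows "X = 0"
proof -
  have "X $ i $ j = 0" for i j
    using SymmD(2)[OF assms(1), of i j] AntiD(2)[OF assms(2), of i j] by simp
  then show ?thesis by (simp add: vec_eq_iff)
qed

lemma subspace_trace_zero: "subspace {X :: real^'n^'n. trace X = 0}"
  by (auto simp: subspace_def trace_def sum.distrib sum_distrib_left[symmetric])

lemma subspace_zero_diag: "subspace {X :: real^'n^'n. \<forall>i. X $ i $ i = 0}"
  unfolding subspace_def by simp

lemma permutes_inv_eq_iff: "\<sigma> permutes UNIV \<Longrightarrow> inv \<sigma> x = inv \<sigma> y \<longleftrightarrow> x = y"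
  by (metis permutes_inverses(1))

lemma conj_act_entry:
  assumes "\<sigma> permutes UNIV"
  shows "conj_act \<sigma> X $ i $ j = X $ inv \<sigma> i $ inv \<sigma> j"
proof -
  have delta: "(\<Sum>l\<in>UNIV. (if i = \<sigma> l then 1 else 0) * (f l :: real)) = f (inv \<sigma> i)" for i f
  proof -
    have "(i = \<sigma> l) = (l = inv \<sigma> i)" for l
      using assms by (metis permutes_inverses(1,2))
    then have "(\<Sum>l\<in>UNIV. (if i = \<sigma> l then 1 else 0) * f l) = (\<Sum>l\<in>UNIV. if l = inv \<sigma> i then f l else 0)"
      by (intro sum.cong) auto
    then show ?thesis by simp
  qed
  show ?thesis
    unfolding conj_act_def matrix_mult_entry transpose_entry Kperm_def vec_lambda_beta
    by (simp add: delta mult.commute[of _ "if _ then _ else _"])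
qed

lemma sum_permutes_inv:
  fixes f :: "'n::finite \<Rightarrow> 'a::comm_monoid_add"
  assumes "\<sigma> permutes UNIV"
  shows "(\<Sum>j\<in>UNIV. f (inv \<sigma> j)) = (\<Sum>j\<in>UNIV. f j)"
  using sum.permute[OF permutes_inv[OF assms], of f] by (simp add: comp_def)

section \<open>Tableaux and Specht modules\<close>

lemma finite_cells: "finite (cells lam)"
proof -
  have "cells lam \<subseteq> Sigma {..<length lam} (\<lambda>i. {..<lam ! i})"
    by (auto simp: cells_def)
  then show ?thesis by (rule finite_subset) auto
qed

lemma finite_tableaux: "finite (tableaux lam :: ('n::finite \<Rightarrow> nat \<times> nat) set)"
proof -
  have "tableaux lam \<subseteq> {f :: 'n \<Rightarrow> nat \<times> nat. \<forall>x. (x \<in> UNIV \<longrightarrow> f x \<in> cells lam)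
                                 \<and> (x \<notin> UNIV \<longrightarrow> f x = undefined)}"
    by (auto simp: tableaux_def bij_betw_def)
  moreover have "finite \<dots>"
    by (rule finite_set_of_finite_funs) (auto simp: finite_cells)
  ultimately show ?thesis by (rule finite_subset)
qed

lemma cells_Cons_Nil: "p \<in> cells [a] \<longleftrightarrow> fst p = 0 \<and> snd p < a"
  by (cases p) (auto simp: cells_def)

lemma cells_two_rows:
  "p \<in> cells [a, b] \<longleftrightarrow> (fst p = 0 \<and> snd p < a) \<or> (fst p = 1 \<and> snd p < b)"
  by (cases p) (auto simp: cells_def less_Suc_eq nth_Cons split: nat.splits)

lemma cells_three_rows:
  "p \<in> cells [a, b, c] \<longleftrightarrow> (fst p = 0 \<and> snd p < a) \<or> (fst p = 1 \<and> snd p < b) \<or> (fst p = 2 \<and> snd p < c)"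
  by (cases p) (auto simp: cells_def less_Suc_eq nth_Cons numeral_2_eq_2 split: nat.splits)

lemma card_cells_Cons_Nil: "card (cells [a]) = a"
proof -
  have "cells [a] = {0} \<times> {..<a}" by (auto simp: cells_Cons_Nil)
  then show ?thesis by (simp add: card_cartesian_product)
qed

lemma card_cells_two_rows: "card (cells [a, b]) = a + b"
proof -
  have "cells [a, b] = {0} \<times> {..<a} \<union> {1} \<times> {..<b}" by (auto simp: cells_two_rows)
  then show ?thesis by (simp, subst card_Un_disjoint) (auto simp: card_cartesian_product)
qed

lemma card_cells_three_rows: "card (cells [a, b, c]) = a + b + c"
proof -
  have "cells [a, b, c] = ({0} \<times> {..<a} \<union> {1} \<times> {..<b}) \<union> {2} \<times> {..<c}"
    by (auto simp: cells_three_rows)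
  then show ?thesis
    by (simp, subst card_Un_disjoint, simp, simp, force, subst card_Un_disjoint)
      (auto simp: card_cartesian_product)
qed

lemma tableauD:
  assumes "t \<in> tableaux lam"
  shows "inj t" "t x \<in> cells lam"
  using assms by (auto simp: tableaux_def bij_betw_def)

lemma tableau_inv_apply:
  assumes "t \<in> tableaux lam" "c \<in> cells lam"
  shows "t (inv t c) = c"
  using assms by (metis bij_betw_inv_into_right tableaux_def mem_Collect_eq)

lemma exists_permutes_map:
  fixes xs ys :: "'a list"
  assumes "distinct xs" "distinct ys" "length xs = length ys"
  shows "\<exists>\<pi>. \<pi> permutes UNIV \<and> map \<pi> xs = ys"
  using assms
proof (induction xs arbitrary: ys)
  case Nil
  then show ?case using permutes_id by fastforce
next
  case (Cons x xs)
  then obtain y ys' where ys: "ys = y # ys'" by (cases ys) auto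
  with Cons.prems have d: "distinct xs" "distinct ys'" "length xs = length ys'"
    "x \<notin> set xs" "y \<notin> set ys'" by auto
  obtain \<pi> where \<pi>: "\<pi> permutes UNIV" "map \<pi> xs = ys'" using Cons.IH[OF d(1-3)] by blast
  have "\<pi> x \<notin> set ys'"
    by (metis \<pi>(1,2) d(4) image_set inj_image_mem_iff permutes_inj)
  then have "map (swap_perm (\<pi> x) y) ys' = ys'"
    using d(5) by (auto intro!: map_idI simp: Transposition.transpose_def)
  then have "map (swap_perm (\<pi> x) y \<circ> \<pi>) xs = ys'"
    using \<pi>(2) by (metis map_map)
  then have "map (swap_perm (\<pi> x) y \<circ> \<pi>) (x # xs) = ys"
    using ys by simp
  moreover have "(swap_perm (\<pi> x) y \<circ> \<pi>) permutes UNIV"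
    using \<pi>(1) by (simp add: permutes_compose permutes_swap_id)
  ultimately show ?case by blast
qed

lemma exists_tableau_map:
  fixes xs :: "'n::finite list"
  assumes "CARD('n) = card (cells lam)" "distinct xs" "distinct cs" "length xs = length cs"
    and "set cs \<subseteq> cells lam"
  shows "\<exists>t \<in> (tableaux lam :: ('n \<Rightarrow> nat \<times> nat) set). map t xs = cs"
proof -
  obtain t0 :: "'n \<Rightarrow> nat \<times> nat" where t0: "bij_betw t0 UNIV (cells lam)"
    using finite_same_card_bij[of "UNIV :: 'n set" "cells lam"] assms(1) finite_cells by auto
  then have t0t: "t0 \<in> tableaux lam" by (simp add: tableaux_def)
  have "inj_on (inv t0) (cells lam)"
    using t0 by (metis bij_betw_imp_inj_on bij_betw_inv_into)
  then have "distinct (map (inv t0) cs)"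
    using assms(3,5) by (simp add: distinct_map inj_on_subset)
  then obtain \<pi> where \<pi>: "\<pi> permutes UNIV" "map \<pi> xs = map (inv t0) cs"
    using exists_permutes_map[OF assms(2)] assms(4) by fastforce
  have "t0 \<circ> \<pi> \<in> tableaux lam"
    using \<pi>(1) t0 unfolding tableaux_def by (metis bij_betw_comp_iff permutes_imp_bij mem_Collect_eq)
  moreover have "map (t0 \<circ> \<pi>) xs = cs"
  proof -
    have "map (t0 \<circ> \<pi>) xs = map t0 (map (inv t0) cs)"
      using \<pi>(2) by (metis map_map)
    also have "\<dots> = cs"
      using assms(5) tableau_inv_apply[OF t0t] by (induct cs) auto
    finally show ?thesis .
  qed
  ultimately show ?thesis by blast
qed

lemma col_stabD:
  assumes "\<pi> \<in> col_stab t"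
  shows "\<pi> permutes UNIV" "snd (t (\<pi> x)) = snd (t x)"
  using assms by (auto simp: col_stab_def)

lemma id_in_col_stab: "id \<in> col_stab t"
  by (simp add: col_stab_def permutes_id)

lemma tabloid_of_comp_inv: "tabloid_of (t \<circ> inv \<pi>) = tabloid_of t \<circ> inv \<pi>"
  by (simp add: tabloid_of_def o_assoc)

lemma comp_permutes_eq_iff:
  assumes "\<sigma> permutes UNIV"
  shows "r \<circ> \<sigma> = g \<longleftrightarrow> r = g \<circ> inv \<sigma>"
  using assms by (metis comp_id o_assoc permutes_inv_o(1,2))

lemma span_image_sum:
  assumes "finite T" "x \<in> span (G ` T)"
  shows "\<exists>c. x = (\<Sum>t\<in>T. c t *\<^sub>R G t)"
  using assms(2)
proof (induction rule: span_induct_alt)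
  case base
  show ?case by (intro exI[of _ "\<lambda>_. 0"]) simp
next
  case (step a y z)
  then obtain t0 c where t0: "t0 \<in> T" "y = G t0" and c: "z = (\<Sum>t\<in>T. c t *\<^sub>R G t)" by blast
  have "a *\<^sub>R y + z = (\<Sum>t\<in>T. (c t + (if t = t0 then a else 0)) *\<^sub>R G t)"
    using t0 assms(1) by (simp add: c scaleR_add_left sum.distrib if_distrib[of "\<lambda>k. k *\<^sub>R _"]
        cong: if_cong)
  then show ?case by (rule exI[where x = "\<lambda>t. c t + (if t = t0 then a else 0)"])
qed

lemma image_eq_specht:
  fixes W :: "(real^'n::finite^'n) set" and f :: "real^'n^'n \<Rightarrow> ('n \<Rightarrow> nat) \<Rightarrow> real"
    and G :: "('n \<Rightarrow> nat \<times> nat) \<Rightarrow> real^'n^'n"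
  assumes sub: "subspace W"
    and add: "\<And>X Y. f (X + Y) = (\<lambda>r. f X r + f Y r)"
    and scale: "\<And>c X. f (c *\<^sub>R X) = (\<lambda>r. c * f X r)"
    and G_in: "\<And>t. t \<in> tableaux lam \<Longrightarrow> G t \<in> W"
    and f_G: "\<And>t. t \<in> tableaux lam \<Longrightarrow> f (G t) = polytabloid t"
    and spanning: "W \<subseteq> span (G ` tableaux lam)"
  shows "f ` W = specht lam"
proof -
  let ?T = "tableaux lam :: ('n \<Rightarrow> nat \<times> nat) set"
  have f_sum: "f (\<Sum>t\<in>?T. c t *\<^sub>R G t) = (\<lambda>r. \<Sum>t\<in>?T. c t * polytabloid t r)" for c
  proof -
    have f0: "f 0 = (\<lambda>r. 0)" using scale[of 0 0] by simp
    have "f (\<Sum>t\<in>S. c t *\<^sub>R G t) = (\<lambda>r. \<Sum>t\<in>S. c t * f (G t) r)" if "finite S" for S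
      using that by induct (simp_all add: add scale f0)
    also have "\<dots> ?T = (\<lambda>r. \<Sum>t\<in>?T. c t * polytabloid t r)"
      using f_G by (intro ext sum.cong) auto
    finally show ?thesis using finite_tableaux by blast
  qed
  show ?thesis
  proof
    show "f ` W \<subseteq> specht lam"
    proof
      fix v assume "v \<in> f ` W"
      then obtain X where X: "X \<in> W" "v = f X" by blast
      then obtain c where "X = (\<Sum>t\<in>?T. c t *\<^sub>R G t)"
        using span_image_sum[OF finite_tableaux] spanning by blast
      then have "f X = (\<lambda>r. \<Sum>t\<in>?T. c t * polytabloid t r)" by (simp add: f_sum)
      then show "v \<in> specht lam" unfolding specht_def X(2) by blast
    qed
    show "specht lam \<subseteq> f ` W"
    proof
      fix v :: "('n \<Rightarrow> nat) \<Rightarrow> real" assume "v \<in> specht lam"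
      then obtain c where "v = f (\<Sum>t\<in>?T. c t *\<^sub>R G t)" unfolding specht_def f_sum by blast
      moreover have "(\<Sum>t\<in>?T. c t *\<^sub>R G t) \<in> W"
        by (intro subspace_sum[OF sub] subspace_scale[OF sub] G_in)
      ultimately show "v \<in> f ` W" by blast
    qed
  qed
qed

lemma spechtIsoI:
  fixes W :: "(real^'n::finite^'n) set" and f :: "real^'n^'n \<Rightarrow> ('n \<Rightarrow> nat) \<Rightarrow> real"
    and G :: "('n \<Rightarrow> nat \<times> nat) \<Rightarrow> real^'n^'n"
  assumes sub: "subspace W"
    and inv: "\<And>\<sigma> X. \<sigma> permutes UNIV \<Longrightarrow> X \<in> W \<Longrightarrow> conj_act \<sigma> X \<in> W"
    and add: "\<And>X Y. f (X + Y) = (\<lambda>r. f X r + f Y r)"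
    and scale: "\<And>c X. f (c *\<^sub>R X) = (\<lambda>r. c * f X r)"
    and inj: "\<And>X. X \<in> W \<Longrightarrow> f X = (\<lambda>r. 0) \<Longrightarrow> X = 0"
    and equiv: "\<And>\<sigma> X. \<sigma> permutes UNIV \<Longrightarrow> X \<in> W \<Longrightarrow> f (conj_act \<sigma> X) = tab_act \<sigma> (f X)"
    and G_in: "\<And>t. t \<in> tableaux lam \<Longrightarrow> G t \<in> W"
    and f_G: "\<And>t. t \<in> tableaux lam \<Longrightarrow> f (G t) = polytabloid t"
    and spanning: "W \<subseteq> span (G ` tableaux lam)"
  shows "spechtIso W lam"
proof -
  have "inj_on f W"
  proof (rule inj_onI)
    fix X Y assume XY: "X \<in> W" "Y \<in> W" "f X = f Y"
    have "X - Y = X + (-1) *\<^sub>R Y" by simp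
    then have "f (X - Y) = (\<lambda>r. f X r + (-1) * f Y r)" by (simp only: add scale)
    then have "f (X - Y) = (\<lambda>r. 0)" using XY(3) by simp
    then have "X - Y = 0" using inj subspace_diff[OF sub XY(1,2)] by blast
    then show "X = Y" by simp
  qed
  then have "bij_betw f W (specht lam)"
    using image_eq_specht[OF sub add scale G_in f_G spanning] by (simp add: bij_betw_def)
  then show ?thesis
    unfolding spechtIso_def using sub inv add scale equiv by (intro conjI exI[of _ f]) blast+
qed

lemma setsum_sp_subset:
  "subspace S \<Longrightarrow> U \<subseteq> S \<Longrightarrow> W \<subseteq> S \<Longrightarrow> setsum_sp U W \<subseteq> S"
  unfolding setsum_sp_def by (blast intro: subspace_add)

lemma setsum_sp_assoc: "setsum_sp U (setsum_sp V W) = setsum_sp (setsum_sp U V) W"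
  unfolding setsum_sp_def by (auto, metis add.assoc, metis add.assoc)

lemma setsum_sp_left_commute: "setsum_sp U (setsum_sp V W) = setsum_sp V (setsum_sp U W)"
  unfolding setsum_sp_def by (auto, metis add.left_commute, metis add.left_commute)

lemma setsum_sp_absorb:
  assumes "subspace W" "subspace U" "U \<subseteq> W"
  shows "setsum_sp U W = W"
  using assms unfolding setsum_sp_def
  by (auto intro: subspace_add) (metis add_0 subspace_0)

lemma setsum_sp_sums_Cons:
  "setsum_sp W {\<Sum>i<n. vs i | vs. \<forall>i<n. vs i \<in> Ws ! i}
    = {\<Sum>i<Suc n. vs i | vs. \<forall>i<Suc n. vs i \<in> (W # Ws) ! i}"
proof safe
  fix X assume "X \<in> setsum_sp W {\<Sum>i<n. vs i | vs. \<forall>i<n. vs i \<in> Ws ! i}"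
  then obtain w vs where "w \<in> W" "\<forall>i<n. vs i \<in> Ws ! i" "X = w + (\<Sum>i<n. vs i)"
    unfolding setsum_sp_def by blast
  then show "\<exists>vs'. X = (\<Sum>i<Suc n. vs' i) \<and> (\<forall>i<Suc n. vs' i \<in> (W # Ws) ! i)"
    by (intro exI[of _ "case_nat w vs"])
      (auto simp del: sum.lessThan_Suc simp: sum.lessThan_Suc_shift less_Suc_eq_0_disj)
next
  fix vs assume "\<forall>i<Suc n. vs i \<in> (W # Ws) ! i"
  then show "(\<Sum>i<Suc n. vs i) \<in> setsum_sp W {\<Sum>i<n. vs i | vs. \<forall>i<n. vs i \<in> Ws ! i}"
    unfolding setsum_sp_def sum.lessThan_Suc_shift by fastforce
qed

lemma isoDecomp_single:
  assumes "spechtIso W lam"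
  shows "isoDecomp W [lam]"
  using assms unfolding isoDecomp_def spechtIso_def
  by (intro conjI exI[of _ "[W]"]) auto

lemma isoDecomp_Cons:
  assumes W: "spechtIso W lam" and U: "isoDecomp U lams" and direct: "W \<inter> U \<subseteq> {0}"
  shows "isoDecomp (setsum_sp W U) (lam # lams)"
proof -
  let ?n = "length lams"
  have subW: "subspace W" using W by (simp add: spechtIso_def)
  obtain Ws where Ws: "length Ws = ?n" "\<forall>i<?n. spechtIso (Ws ! i) (lams ! i)"
    and U_eq: "U = {\<Sum>i<?n. vs i | vs. \<forall>i<?n. vs i \<in> Ws ! i}"
    and U_ind: "\<And>vs. (\<forall>i<?n. vs i \<in> Ws ! i) \<Longrightarrow> (\<Sum>i<?n. vs i) = 0 \<Longrightarrow> \<forall>i<?n. vs i = 0"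
    and subU: "subspace U"
    using U unfolding isoDecomp_def by blast
  have sums: "setsum_sp W U = {\<Sum>i<Suc ?n. vs i | vs. \<forall>i<Suc ?n. vs i \<in> (W # Ws) ! i}"
    unfolding U_eq by (rule setsum_sp_sums_Cons)
  have independent: "\<forall>i<Suc ?n. vs i = 0"
    if vs: "\<forall>i<Suc ?n. vs i \<in> (W # Ws) ! i" and zero: "(\<Sum>i<Suc ?n. vs i) = 0" for vs
  proof -
    have rest: "(\<Sum>i<?n. vs (Suc i)) \<in> U" unfolding U_eq using vs by fastforce
    have "vs 0 = - (\<Sum>i<?n. vs (Suc i))"
      using zero by (simp del: sum.lessThan_Suc add: sum.lessThan_Suc_shift eq_neg_iff_add_eq_0)
    then have "vs 0 \<in> W \<inter> U" using vs subspace_neg[OF subU rest] by auto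
    then have "vs 0 = 0" using direct by blast
    moreover have "\<forall>i<?n. vs (Suc i) \<in> Ws ! i" using vs by auto
    ultimately have "\<forall>i<?n. vs (Suc i) = 0"
      using U_ind[of "\<lambda>i. vs (Suc i)"] vs zero \<open>vs 0 = 0\<close>
      by (simp del: sum.lessThan_Suc add: sum.lessThan_Suc_shift)
    with \<open>vs 0 = 0\<close> show ?thesis by (auto simp: less_Suc_eq_0_disj)
  qed
  show ?thesis
    unfolding isoDecomp_def
  proof (intro conjI exI[of _ "W # Ws"])
    show "subspace (setsum_sp W U)"
      using subspace_sums[OF subW subU] by (simp add: setsum_sp_def)
    show "\<forall>i<length (lam # lams). spechtIso ((W # Ws) ! i) ((lam # lams) ! i)"
      using W Ws(2) by (auto simp: less_Suc_eq_0_disj)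
    show "length (W # Ws) = length (lam # lams)" using Ws(1) by simp
    show "setsum_sp W U = {\<Sum>i<length (lam # lams). vs i |vs.
        \<forall>i<length (lam # lams). vs i \<in> (W # Ws) ! i}"
      unfolding length_Cons by (rule sums)
    show "\<forall>vs. (\<forall>i<length (lam # lams). vs i \<in> (W # Ws) ! i) \<and> (\<Sum>i<length (lam # lams). vs i) = 0
        \<longrightarrow> (\<forall>i<length (lam # lams). vs i = 0)"
      unfolding length_Cons using independent by blast
  qed
qed

section \<open>The trivial constituent \<open>{n}\<close>\<close>

definition J_minus_nI :: "real^'n::finite^'n" where
  "J_minus_nI = (\<chi> i j. if i = j then 1 - real CARD('n) else 1)"

definition triv_comp :: "(real^'n::finite^'n) set" where
  "triv_comp = range (\<lambda>c. c *\<^sub>R J_minus_nI)"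

text \<open>The coordinate is the trace, normalised by \<open>trace (J - nI) = n - n\<^sup>2\<close>.\<close>

definition triv_coord :: "real^'n::finite^'n \<Rightarrow> ('n \<Rightarrow> nat) \<Rightarrow> real" where
  "triv_coord X r =
     (if r = (\<lambda>x. 0) then trace X / (real CARD('n) - real CARD('n) * real CARD('n)) else 0)"

lemma J_minus_nI_entry:
  "(J_minus_nI :: real^'n::finite^'n) $ i $ j = (if i = j then 1 - real CARD('n) else 1)"
  by (simp add: J_minus_nI_def)

lemma trace_J_minus_nI:
  "trace (J_minus_nI :: real^'n::finite^'n) = real CARD('n) - real CARD('n) * real CARD('n)"
  by (simp add: trace_def J_minus_nI_entry algebra_simps)

lemma card_minus_square_neq_zero:
  "CARD('n::finite) \<ge> 2 \<Longrightarrow> real CARD('n) - real CARD('n) * real CARD('n) \<noteq> 0"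
proof -
  assume "CARD('n) \<ge> 2"
  then have "real CARD('n) * real CARD('n) \<ge> 2 * real CARD('n)" by (intro mult_right_mono) auto
  then show ?thesis using \<open>CARD('n) \<ge> 2\<close> by linarith
qed

lemma J_minus_nI_Symm: "(J_minus_nI :: real^'n::finite^'n) \<in> Symm"
proof -
  have "(\<Sum>j\<in>UNIV. (J_minus_nI :: real^'n^'n) $ i $ j) = (\<Sum>j\<in>UNIV. 1 - (if j = i then real CARD('n) else 0))" for i
    by (rule sum.cong) (auto simp: J_minus_nI_entry)
  then have "(\<Sum>j\<in>UNIV. (J_minus_nI :: real^'n^'n) $ i $ j) = 0" for i
    by (simp add: sum_subtractf)
  moreover have "(J_minus_nI :: real^'n^'n) $ i $ j = J_minus_nI $ j $ i" for i j
    by (auto simp: J_minus_nI_entry)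
  ultimately show ?thesis unfolding Symm_iff by blast
qed

lemma conj_act_scaleR: "\<sigma> permutes UNIV \<Longrightarrow> conj_act \<sigma> (c *\<^sub>R X) = c *\<^sub>R conj_act \<sigma> X"
  by (simp add: vec_eq_iff conj_act_entry)

lemma trace_conj_act: "\<sigma> permutes UNIV \<Longrightarrow> trace (conj_act \<sigma> X) = trace X"
  by (simp add: trace_def conj_act_entry sum_permutes_inv[where f = "\<lambda>i. X $ i $ i"])

lemma subspace_triv_comp: "subspace triv_comp"
  unfolding triv_comp_def span_singleton[symmetric] by (rule subspace_span)

lemma triv_comp_Symm: "triv_comp \<subseteq> Symm"
  unfolding triv_comp_def using J_minus_nI_Symm subspace_scale[OF subspace_Symm] by blast

lemma triv_comp_trace_zero:
  assumes "CARD('n::finite) \<ge> 2" "X \<in> (triv_comp :: (real^'n^'n) set)" "trace X = 0"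
  shows "X = 0"
  using assms card_minus_square_neq_zero[OF assms(1)]
  by (auto simp: triv_comp_def trace_def trace_J_minus_nI[unfolded trace_def] sum_distrib_left[symmetric])

lemma polytabloid_one_row:
  assumes t: "t \<in> tableaux [CARD('n::finite)]"
  shows "polytabloid (t :: 'n \<Rightarrow> nat \<times> nat) = (\<lambda>r. if r = (\<lambda>x. 0) then 1 else 0)"
proof -
  have "tabloid_of t = (\<lambda>x. 0)"
    using tableauD(2)[OF t] by (auto simp: tabloid_of_def cells_Cons_Nil fun_eq_iff)
  moreover have "\<pi> x = x" if "\<pi> \<in> col_stab t" for \<pi> x
  proof -
    have "t (\<pi> x) = t x"
      using tableauD(2)[OF t] col_stabD(2)[OF that, of x] by (simp add: cells_Cons_Nil prod_eq_iff)
    then show ?thesis using tableauD(1)[OF t] by (simp add: inj_eq)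
  qed
  then have "col_stab t = {id}" using id_in_col_stab by (auto simp: fun_eq_iff)
  ultimately show ?thesis by (auto simp: polytabloid_def fun_eq_iff)
qed

lemma triv_coord_conj_act:
  assumes "\<sigma> permutes UNIV"
  shows "triv_coord (conj_act \<sigma> X) = tab_act \<sigma> (triv_coord X)"
proof -
  have "r \<circ> \<sigma> = (\<lambda>x. 0) \<longleftrightarrow> r = (\<lambda>x. 0) \<circ> inv \<sigma>" for r :: "'a \<Rightarrow> nat"
    by (rule comp_permutes_eq_iff[OF assms])
  then have "r \<circ> \<sigma> = (\<lambda>x. 0) \<longleftrightarrow> r = (\<lambda>x. 0)" for r :: "'a \<Rightarrow> nat"
    by (simp add: comp_def)
  then show ?thesis
    by (simp add: tab_act_def triv_coord_def trace_conj_act[OF assms] fun_eq_iff)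
qed

lemma spechtIso_triv_comp:
  assumes card: "CARD('n::finite) \<ge> 2"
  shows "spechtIso (triv_comp :: (real^'n^'n) set) [CARD('n)]"
proof (rule spechtIsoI[where f = triv_coord and G = "\<lambda>t. J_minus_nI"])
  let ?T = "tableaux [CARD('n)] :: ('n \<Rightarrow> nat \<times> nat) set"
  have nz: "real CARD('n) - real CARD('n) * real CARD('n) \<noteq> 0"
    by (rule card_minus_square_neq_zero[OF card])
  show "subspace (triv_comp :: (real^'n^'n) set)" by (rule subspace_triv_comp)
  show "triv_coord (X + Y) = (\<lambda>r. triv_coord X r + triv_coord Y r)" for X Y :: "real^'n^'n"
    by (auto simp: triv_coord_def trace_add add_divide_distrib)
  show "conj_act \<sigma> X \<in> triv_comp" if s: "\<sigma> permutes UNIV" and X: "X \<in> triv_comp"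
    for \<sigma> :: "'n \<Rightarrow> 'n" and X :: "real^'n^'n"
  proof -
    obtain c where "X = c *\<^sub>R J_minus_nI" using X unfolding triv_comp_def by blast
    moreover have "conj_act \<sigma> J_minus_nI = J_minus_nI"
      using permutes_inv_eq_iff[OF s] by (simp add: vec_eq_iff conj_act_entry[OF s] J_minus_nI_def)
    ultimately show ?thesis unfolding triv_comp_def using conj_act_scaleR[OF s] by auto
  qed
  show "X = 0" if "X \<in> triv_comp" "triv_coord X = (\<lambda>r. 0)" for X :: "real^'n^'n"
  proof -
    have "trace X / (real CARD('n) - real CARD('n) * real CARD('n)) = 0"
      using fun_cong[OF that(2), of "\<lambda>x. 0"] by (simp add: triv_coord_def)
    then show ?thesis using triv_comp_trace_zero[OF card that(1)] nz by simp
  qed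
  show "triv_coord J_minus_nI = polytabloid t" if "t \<in> ?T" for t
    using nz by (auto simp: polytabloid_one_row[OF that] triv_coord_def trace_J_minus_nI fun_eq_iff)
  obtain t0 where "t0 \<in> ?T"
    using exists_tableau_map[of "[CARD('n)]" "[]" "[]"] by (auto simp: card_cells_Cons_Nil)
  then show "triv_comp \<subseteq> span ((\<lambda>t. J_minus_nI) ` ?T)"
    unfolding triv_comp_def by (auto intro: span_scale span_base)
qed (auto simp: triv_coord_conj_act triv_coord_def trace_def sum_distrib_left triv_comp_def
    intro: image_eqI[of _ _ 1])

section \<open>The standard constituent \<open>{n-1,1}\<close>\<close>

text \<open>The tabloid of shape \<open>[n-1,1]\<close> with \<open>x\<close> in the second row.\<close>

definition single_tabloid :: "'n \<Rightarrow> 'n \<Rightarrow> nat" where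
  "single_tabloid x = (\<lambda>z. if z = x then 1 else 0)"

lemma single_tabloid_eq_iff: "single_tabloid x = single_tabloid y \<longleftrightarrow> x = y"
  by (auto simp: single_tabloid_def fun_eq_iff split: if_splits)

lemma single_tabloid_comp_inv:
  "\<sigma> permutes UNIV \<Longrightarrow> single_tabloid (inv \<sigma> y) \<circ> inv \<sigma> = single_tabloid y"
  by (auto simp: single_tabloid_def fun_eq_iff dest: permutes_inv_eq_iff)

locale tableau_n1 =
  fixes t :: "'n::finite \<Rightarrow> nat \<times> nat"
  assumes tab: "t \<in> tableaux [CARD('n) - 1, 1]"
    and card: "CARD('n) \<ge> 2"
begin

definition "a = inv t (1, 0)"
definition "b = inv t (0, 0)"

lemma t_a: "t a = (1, 0)" and t_b: "t b = (0, 0)"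
  using card by (auto simp: a_def b_def intro!: tableau_inv_apply[OF tab] simp: cells_two_rows)

lemma a_neq_b: "a \<noteq> b"
  using t_a t_b by auto

lemma t_eq_iff: "t x = t y \<longleftrightarrow> x = y"
  using tableauD(1)[OF tab] by (auto simp: inj_eq)

lemma t_cases: "(fst (t x) = 0 \<and> snd (t x) < CARD('n) - 1) \<or> t x = (1, 0)"
  using tableauD(2)[OF tab, of x] by (cases "t x") (auto simp: cells_two_rows)

lemma tabloid: "tabloid_of t = single_tabloid a"
proof
  fix z
  show "tabloid_of t z = single_tabloid a z"
    using t_cases[of z] t_a t_eq_iff[of z a] by (auto simp: tabloid_of_def single_tabloid_def)
qed

lemma col_stab_eq: "col_stab t = {id, swap_perm a b}"
proof
  have "snd (t (swap_perm a b x)) = snd (t x)" for x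
    by (cases "x = a"; cases "x = b") (auto simp: t_a t_b)
  then show "{id, swap_perm a b} \<subseteq> col_stab t"
    using id_in_col_stab by (simp add: col_stab_def permutes_swap_id)
  show "col_stab t \<subseteq> {id, swap_perm a b}"
  proof
    fix \<pi> assume p: "\<pi> \<in> col_stab t"
    have fix_other: "\<pi> z = z" if "z \<noteq> a" "z \<noteq> b" for z
    proof -
      have "fst (t z) = 0" "snd (t z) \<noteq> 0"
        using that t_cases[of z] t_a t_b t_eq_iff by (metis prod.collapse)+
      then have "t (\<pi> z) = t z"
        using col_stabD(2)[OF p, of z] t_cases[of "\<pi> z"] by (auto simp: prod_eq_iff)
      then show ?thesis by (simp add: t_eq_iff)
    qed
    have in_ab: "\<pi> z \<in> {a, b}" if "z = a \<or> z = b" for z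
    proof -
      have "snd (t (\<pi> z)) = 0" using col_stabD(2)[OF p, of z] that t_a t_b by auto
      then have "t (\<pi> z) = t a \<or> t (\<pi> z) = t b"
        using t_cases[of "\<pi> z"] by (auto simp: prod_eq_iff t_a t_b)
      then show ?thesis by (auto simp: t_eq_iff)
    qed
    have "\<pi> b \<noteq> \<pi> a" using permutes_inj[OF col_stabD(1)[OF p]] a_neq_b by (simp add: inj_eq)
    with in_ab[of a] in_ab[of b] consider "\<pi> a = a" "\<pi> b = b" | "\<pi> a = b" "\<pi> b = a" by auto
    then show "\<pi> \<in> {id, swap_perm a b}"
    proof cases
      case 1
      have "\<pi> x = x" for x using 1 fix_other[of x] by (cases "x = a"; cases "x = b") auto
      then show ?thesis by (simp add: fun_eq_iff)
    next
      case 2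
      have "\<pi> x = swap_perm a b x" for x
        using 2 fix_other[of x] by (cases "x = a"; cases "x = b") auto
      then show ?thesis by (simp add: fun_eq_iff)
    qed
  qed
qed

lemma polytabloid_eq:
  "polytabloid t = (\<lambda>r. (if r = single_tabloid a then 1 else 0) - (if r = single_tabloid b then 1 else 0))"
proof -
  have "id \<noteq> swap_perm a b" using a_neq_b by (metis id_apply transpose_apply_first)
  moreover have "tabloid_of (t \<circ> swap_perm a b) = single_tabloid b"
    using tabloid a_neq_b
    by (auto simp: tabloid_of_def single_tabloid_def Transposition.transpose_def fun_eq_iff)
  ultimately show ?thesis
    unfolding polytabloid_def col_stab_eq using a_neq_b
    by (auto simp: fun_eq_iff tabloid inv_transpose_eq sign_swap_id)
qed

end

definition diff_vec :: "'n \<Rightarrow> 'n \<Rightarrow> 'n \<Rightarrow> real" where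
  "diff_vec x y i = (if i = x then 1 else 0) - (if i = y then 1 else 0)"

lemma sum_diff_vec: "sum (diff_vec x y) (UNIV :: 'n::finite set) = 0"
  by (simp add: diff_vec_def sum_subtractf)

lemma sum_zero_eq_sum_diff_vec:
  fixes u :: "'n::finite \<Rightarrow> real"
  assumes "sum u UNIV = 0"
  shows "u = (\<lambda>i. \<Sum>x\<in>UNIV. u x * diff_vec x x0 i)"
proof
  fix i
  let ?c = "if i = x0 then 1 else 0 :: real"
  have "(\<Sum>x\<in>UNIV. u x * diff_vec x x0 i) = (\<Sum>x\<in>UNIV. (if x = i then u x else 0) - ?c * u x)"
    by (intro sum.cong) (auto simp: diff_vec_def)
  also have "\<dots> = u i" using assms by (simp add: sum_subtractf sum_distrib_left[symmetric])
  finally show "u i = (\<Sum>x\<in>UNIV. u x * diff_vec x x0 i)" ..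
qed

text \<open>The embedding of \<open>\<real>\<^sup>n\<close> into the permutation module of shape \<open>[n-1,1]\<close>.\<close>

definition single_coord :: "('n::finite \<Rightarrow> real) \<Rightarrow> ('n \<Rightarrow> nat) \<Rightarrow> real" where
  "single_coord u = (\<lambda>r. \<Sum>x\<in>UNIV. if r = single_tabloid x then u x else 0)"

lemma single_coord_add: "single_coord (\<lambda>i. u i + v i) = (\<lambda>r. single_coord u r + single_coord v r)"
  by (auto simp: single_coord_def fun_eq_iff sum.distrib[symmetric] intro!: sum.cong)

lemma single_coord_scale: "single_coord (\<lambda>i. c * u i) = (\<lambda>r. c * single_coord u r)"
  by (auto simp: single_coord_def fun_eq_iff sum_distrib_left intro!: sum.cong)

lemma single_coord_single_tabloid: "single_coord u (single_tabloid x) = u x"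
  by (simp add: single_coord_def single_tabloid_eq_iff)

lemma single_coord_comp_inv:
  assumes s: "\<sigma> permutes UNIV"
  shows "single_coord (u \<circ> inv \<sigma>) = tab_act \<sigma> (single_coord u)"
proof
  fix r
  have "single_coord (u \<circ> inv \<sigma>) r = (\<Sum>y\<in>UNIV. if r = single_tabloid y then u (inv \<sigma> y) else 0)"
    unfolding single_coord_def o_apply ..
  also have "\<dots> = (\<Sum>y\<in>UNIV. if r \<circ> \<sigma> = single_tabloid (inv \<sigma> y) then u (inv \<sigma> y) else 0)"
    by (simp add: comp_permutes_eq_iff[OF s] single_tabloid_comp_inv[OF s])
  also have "\<dots> = (\<Sum>x\<in>UNIV. if r \<circ> \<sigma> = single_tabloid x then u x else 0)"
    by (rule sum_permutes_inv[OF s, where f = "\<lambda>x. if r \<circ> \<sigma> = single_tabloid x then u x else 0"])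
  finally show "single_coord (u \<circ> inv \<sigma>) r = tab_act \<sigma> (single_coord u) r"
    by (simp add: tab_act_def single_coord_def)
qed

lemma (in tableau_n1) polytabloid_eq_single_coord: "polytabloid t = single_coord (diff_vec a b)"
proof
  fix r
  have "single_coord (diff_vec a b) r = (\<Sum>x\<in>UNIV. (if x = a then (if r = single_tabloid a then 1 else 0) else 0)
      - (if x = b then (if r = single_tabloid b then 1 else 0) else 0))"
    unfolding single_coord_def by (rule sum.cong) (auto simp: diff_vec_def)
  then show "polytabloid t r = single_coord (diff_vec a b) r" by (simp add: sum_subtractf polytabloid_eq)
qed

locale std_embedding =
  fixes M :: "('n::finite \<Rightarrow> real) \<Rightarrow> real^'n^'n" and \<phi> :: "real^'n^'n \<Rightarrow> 'n \<Rightarrow> real"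
  assumes card: "CARD('n) \<ge> 2"
    and M_add: "\<And>u v. M (\<lambda>i. u i + v i) = M u + M v"
    and M_scale: "\<And>c u. M (\<lambda>i. c * u i) = c *\<^sub>R M u"
    and \<phi>_add: "\<And>X Y. \<phi> (X + Y) = (\<lambda>i. \<phi> X i + \<phi> Y i)"
    and \<phi>_scale: "\<And>c X. \<phi> (c *\<^sub>R X) = (\<lambda>i. c * \<phi> X i)"
    and \<phi>_M: "\<And>u. sum u UNIV = 0 \<Longrightarrow> \<phi> (M u) = u"
    and M_conj: "\<And>\<sigma> u. \<sigma> permutes UNIV \<Longrightarrow> conj_act \<sigma> (M u) = M (u \<circ> inv \<sigma>)"
begin

lemma M_zero: "M (\<lambda>i. 0) = 0"
  using M_scale[of 0 "\<lambda>i. 0"] by simp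

lemma M_sum: "finite S \<Longrightarrow> M (\<lambda>i. \<Sum>x\<in>S. c x * v x i) = (\<Sum>x\<in>S. c x *\<^sub>R M (v x))"
proof (induct rule: finite_induct)
  case (insert y F)
  have "M (\<lambda>i. \<Sum>x\<in>insert y F. c x * v x i) = M (\<lambda>i. c y * v y i + (\<Sum>x\<in>F. c x * v x i))"
    using insert by simp
  also have "\<dots> = c y *\<^sub>R M (v y) + M (\<lambda>i. \<Sum>x\<in>F. c x * v x i)"
    using M_add[of "\<lambda>i. c y * v y i"] M_scale by simp
  finally show ?case using insert by simp
qed (simp add: M_zero)

lemma subspace_image: "subspace {M u | u. sum u UNIV = 0}"
  unfolding subspace_def
proof (intro conjI ballI allI)
  show "0 \<in> {M u | u. sum u UNIV = 0}" using M_zero by (intro CollectI exI[of _ "\<lambda>i. 0"]) simp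
  fix X Y assume "X \<in> {M u | u. sum u UNIV = 0}" "Y \<in> {M u | u. sum u UNIV = 0}"
  then obtain u v where "X = M u" "Y = M v" "sum u UNIV = 0" "sum v UNIV = 0" by blast
  then show "X + Y \<in> {M u | u. sum u UNIV = 0}"
    using M_add[of u v] by (intro CollectI exI[of _ "\<lambda>i. u i + v i"]) (simp add: sum.distrib)
next
  fix c X assume "X \<in> {M u | u. sum u UNIV = 0}"
  then obtain u where "X = M u" "sum u UNIV = 0" by blast
  then show "c *\<^sub>R X \<in> {M u | u. sum u UNIV = 0}"
    using M_scale[of c u] by (intro CollectI exI[of _ "\<lambda>i. c * u i"]) (simp add: sum_distrib_left[symmetric])
qed

lemma diff_vec_image_in_span:
  "M (diff_vec x x0) \<in> span ((\<lambda>t. M (diff_vec (tableau_n1.a t) (tableau_n1.b t))) ` tableaux [CARD('n) - 1, 1])"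
proof (cases "x = x0")
  case True
  then have "diff_vec x x0 = (\<lambda>i. 0)" by (simp add: fun_eq_iff diff_vec_def)
  then show ?thesis using M_zero by (simp add: span_zero)
next
  case False
  then obtain t where t: "t \<in> tableaux [CARD('n) - 1, 1]" "map t [x, x0] = [(1,0), (0,0)]"
    using exists_tableau_map[of "[CARD('n) - 1, 1]" "[x, x0]" "[(1,0), (0,0)]"] card
    by (auto simp: cells_two_rows card_cells_two_rows)
  interpret tableau_n1 t using t card by unfold_locales
  have "a = x" "b = x0" using t_eq_iff[of a x] t_eq_iff[of b x0] t_a t_b t(2) by auto
  then show ?thesis by (intro span_base image_eqI[OF _ t(1)]) simp
qed

lemma spechtIso_image: "spechtIso {M u | u. sum u UNIV = 0} [CARD('n) - 1, 1]"
proof (rule spechtIsoI[where f = "\<lambda>X. single_coord (\<phi> X)"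
      and G = "\<lambda>t. M (diff_vec (tableau_n1.a t) (tableau_n1.b t))"])
  let ?W = "{M u | u. sum u UNIV = 0}"
  show "conj_act \<sigma> X \<in> ?W" if s: "\<sigma> permutes UNIV" and XW: "X \<in> ?W" for \<sigma> X
  proof -
    obtain u where "X = M u" "sum u UNIV = 0" using XW by blast
    then show ?thesis
      using M_conj[OF s] sum_permutes_inv[OF s, of u]
      by (intro CollectI exI[of _ "u \<circ> inv \<sigma>"]) (simp add: comp_def)
  qed
  show "X = 0" if XW: "X \<in> ?W" and zero: "single_coord (\<phi> X) = (\<lambda>r. 0)" for X
  proof -
    obtain u where u: "X = M u" "sum u UNIV = 0" using XW by blast
    have "u = (\<lambda>i. 0)"
      using fun_cong[OF zero, of "single_tabloid _"] u by (simp add: \<phi>_M single_coord_single_tabloid fun_eq_iff)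
    then show ?thesis using u M_zero by simp
  qed
  show "single_coord (\<phi> (conj_act \<sigma> X)) = tab_act \<sigma> (single_coord (\<phi> X))"
    if s: "\<sigma> permutes UNIV" and XW: "X \<in> ?W" for \<sigma> X
  proof -
    obtain u where u: "X = M u" "sum u UNIV = 0" using XW by blast
    then have "sum (u \<circ> inv \<sigma>) UNIV = 0" using sum_permutes_inv[OF s, of u] by (simp add: comp_def)
    then show ?thesis using u by (simp add: M_conj[OF s] \<phi>_M single_coord_comp_inv[OF s])
  qed
  show "single_coord (\<phi> (M (diff_vec (tableau_n1.a t) (tableau_n1.b t)))) = polytabloid t"
    if "t \<in> tableaux [CARD('n) - 1, 1]" for t
  proof -
    interpret tableau_n1 t using that card by unfold_locales
    show ?thesis by (simp add: \<phi>_M sum_diff_vec polytabloid_eq_single_coord)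
  qed
  show "?W \<subseteq> span ((\<lambda>t. M (diff_vec (tableau_n1.a t) (tableau_n1.b t))) ` tableaux [CARD('n) - 1, 1])"
  proof
    fix X assume "X \<in> ?W"
    then obtain u where u: "X = M u" "sum u UNIV = 0" by blast
    obtain x0 :: 'n where True by blast
    have "X = (\<Sum>x\<in>UNIV. u x *\<^sub>R M (diff_vec x x0))"
      using u M_sum[of UNIV u "\<lambda>x. diff_vec x x0"] sum_zero_eq_sum_diff_vec[OF u(2), of x0] by simp
    then show "X \<in> span ((\<lambda>t. M (diff_vec (tableau_n1.a t) (tableau_n1.b t))) ` tableaux [CARD('n) - 1, 1])"
      by (simp only:) (intro span_sum span_scale diff_vec_image_in_span)
  qed
qed (use subspace_image sum_diff_vec in \<open>auto simp: \<phi>_add \<phi>_scale single_coord_add single_coord_scale\<close>)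

end

definition col_mat :: "('n::finite \<Rightarrow> real) \<Rightarrow> real^'n^'n" where
  "col_mat u = (\<chi> i j. u j)"

definition sym_std_mat :: "('n::finite \<Rightarrow> real) \<Rightarrow> real^'n^'n" where
  "sym_std_mat u = (\<chi> i j. (if i = j then real CARD('n) * u i else 0) - u i - u j)"

definition col_comp :: "(real^'n::finite^'n) set" where
  "col_comp = {col_mat u | u. sum u UNIV = 0}"

definition sym_std_comp :: "(real^'n::finite^'n) set" where
  "sym_std_comp = {sym_std_mat u | u. sum u UNIV = 0}"

lemma col_mat_entry: "col_mat u $ i $ j = u j"
  by (simp add: col_mat_def)

lemma sym_std_mat_entry:
  "(sym_std_mat u :: real^'n::finite^'n) $ i $ j = (if i = j then real CARD('n) * u i else 0) - u i - u j"
  by (simp add: sym_std_mat_def)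

lemma spechtIso_col_comp:
  assumes "CARD('n::finite) \<ge> 2"
  shows "spechtIso (col_comp :: (real^'n^'n) set) [CARD('n) - 1, 1]"
  unfolding col_comp_def
  by (rule std_embedding.spechtIso_image[where \<phi> = "\<lambda>X j. (\<Sum>i\<in>UNIV. X $ i $ j) / real CARD('n)"],
      unfold_locales)
    (use assms in \<open>auto simp: col_mat_def vec_eq_iff fun_eq_iff sum.distrib add_divide_distrib
      sum_distrib_left conj_act_entry\<close>)

lemma spechtIso_sym_std_comp:
  assumes "CARD('n::finite) \<ge> 3"
  shows "spechtIso (sym_std_comp :: (real^'n^'n) set) [CARD('n) - 1, 1]"
  unfolding sym_std_comp_def
proof (rule std_embedding.spechtIso_image[where \<phi> = "\<lambda>X i. X $ i $ i / (real CARD('n) - 2)"],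
    unfold_locales)
  have "real CARD('n) - 2 \<noteq> 0" using assms by simp
  then show "(\<lambda>i. sym_std_mat u $ i $ i / (real CARD('n) - 2)) = u" for u :: "'n \<Rightarrow> real"
    by (simp add: sym_std_mat_entry fun_eq_iff field_simps)
  show "conj_act \<sigma> (sym_std_mat u) = sym_std_mat (u \<circ> inv \<sigma>)" if "\<sigma> permutes UNIV" for \<sigma> u
    using permutes_inv_eq_iff[OF that] by (simp add: vec_eq_iff conj_act_entry[OF that] sym_std_mat_entry)
qed (use assms in \<open>auto simp: sym_std_mat_def vec_eq_iff algebra_simps add_divide_distrib\<close>)

section \<open>The constituent \<open>{n-2,1\<^sup>2}\<close>: antisymmetric matrices\<close>

definition unit_mat :: "'n::finite \<Rightarrow> 'n \<Rightarrow> real^'n^'n" where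
  "unit_mat p q = (\<chi> x y. if x = p \<and> y = q then 1 else 0)"

definition skew_unit :: "'n::finite \<Rightarrow> 'n \<Rightarrow> real^'n^'n" where
  "skew_unit p q = unit_mat p q - unit_mat q p"

definition skew_triangle :: "'n::finite \<Rightarrow> 'n \<Rightarrow> 'n \<Rightarrow> real^'n^'n" where
  "skew_triangle c a b = skew_unit a b + skew_unit b c + skew_unit c a"

lemma unit_mat_entry: "unit_mat p q $ x $ y = (if x = p \<and> y = q then 1 else 0)"
  by (simp add: unit_mat_def)

lemma unit_mat_row_sum: "(\<Sum>y\<in>UNIV. unit_mat p q $ x $ y) = (if x = p then 1 else 0)"
proof -
  have "(\<Sum>y\<in>UNIV. unit_mat p q $ x $ y) = (\<Sum>y\<in>UNIV. if y = q then (if x = p then 1 else 0) else 0)"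
    by (rule sum.cong) (auto simp: unit_mat_entry)
  then show ?thesis by simp
qed

lemma sum_sum_delta:
  "(\<Sum>x\<in>(UNIV::'n::finite set). \<Sum>y\<in>(UNIV::'m::finite set).
      if P x y then (if x = p \<and> y = q then (k::real) else 0) else 0) = (if P p q then k else 0)"
proof -
  have "(\<Sum>y\<in>(UNIV::'m set). if P x y then (if x = p \<and> y = q then k else 0) else 0)
      = (\<Sum>y\<in>(UNIV::'m set). if y = q then (if x = p \<and> P x q then k else 0) else 0)" for x
    by (rule sum.cong) auto
  also have "\<dots> x = (if x = p then (if P p q then k else 0) else 0)" for x
    by auto
  finally show ?thesis by simp
qed

lemma sum_sum_delta_const:
  "(\<Sum>x\<in>(UNIV::'n::finite set). \<Sum>y\<in>(UNIV::'m::finite set). if x = p \<and> y = q then (k::real) else 0) = k"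
  using sum_sum_delta[of "\<lambda>x y. True" p q k] by simp

lemma skew_unit_entry:
  "skew_unit p q $ i $ j = (if i = p \<and> j = q then 1 else 0) - (if i = q \<and> j = p then 1 else 0)"
  by (simp add: skew_unit_def unit_mat_entry)

lemma skew_triangle_entry:
  "skew_triangle c a b $ i $ j = skew_unit a b $ i $ j + skew_unit b c $ i $ j + skew_unit c a $ i $ j"
  by (simp add: skew_triangle_def)

lemma skew_unit_antisym: "skew_unit p q $ i $ j = - skew_unit p q $ j $ i"
  unfolding skew_unit_entry by (cases "i = p"; cases "j = q"; cases "i = q"; cases "j = p") simp_all

lemma skew_unit_row_sum:
  "(\<Sum>j\<in>UNIV. skew_unit p q $ i $ j) = (if i = p then 1 else 0) - (if i = q then 1 else 0)"
  unfolding skew_unit_def vector_minus_component sum_subtractf unit_mat_row_sum ..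

lemma skew_triangle_Anti: "skew_triangle c a b \<in> Anti"
proof -
  have "(\<Sum>j\<in>UNIV. skew_triangle c a b $ i $ j) = 0" for i
    unfolding skew_triangle_entry sum.distrib skew_unit_row_sum by simp
  moreover have "skew_triangle c a b $ i $ j = - skew_triangle c a b $ j $ i" for i j
    unfolding skew_triangle_entry
    using skew_unit_antisym[of a b i j] skew_unit_antisym[of b c i j] skew_unit_antisym[of c a i j]
    by simp
  ultimately show ?thesis unfolding Anti_iff by blast
qed

lemma conj_act_Anti:
  assumes "\<sigma> permutes UNIV" "X \<in> Anti"
  shows "conj_act \<sigma> X \<in> Anti"
proof -
  have "(\<Sum>j\<in>UNIV. X $ inv \<sigma> i $ inv \<sigma> j) = 0" for i
    using AntiD(1)[OF assms(2)] sum_permutes_inv[OF assms(1), where f = "\<lambda>j. X $ inv \<sigma> i $ j"]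
    by simp
  then show ?thesis
    unfolding Anti_iff conj_act_entry[OF assms(1)] using AntiD(2)[OF assms(2)] by blast
qed

text \<open>
  Vanishing of the rows and columns through \<open>c\<^sub>0\<close> is forced by the row sums, so the
  triangles through \<open>c\<^sub>0\<close> span \<open>Anti\<^sub>n\<close>.
\<close>

lemma Anti_eq_0_if_vanishes_off:
  assumes Y: "Y \<in> Anti" and off: "\<And>i j. i \<noteq> c0 \<Longrightarrow> j \<noteq> c0 \<Longrightarrow> Y $ i $ j = 0"
  shows "Y = 0"
proof -
  have col: "Y $ i $ c0 = 0" for i
  proof (cases "i = c0")
    case False
    have "0 = (\<Sum>j\<in>UNIV. Y $ i $ j)" using AntiD(1)[OF Y] by simp
    also have "\<dots> = (\<Sum>j\<in>UNIV. if j = c0 then Y $ i $ c0 else 0)"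
      by (rule sum.cong) (auto simp: off[OF False])
    finally show ?thesis by simp
  qed (simp add: AntiD(3)[OF Y])
  have "Y $ i $ j = 0" for i j
    using off[of i j] col[of i] col[of j] AntiD(2)[OF Y, of c0 j] by (cases "i = c0"; cases "j = c0") auto
  then show ?thesis by (simp add: vec_eq_iff)
qed

lemma Anti_eq_sum_skew_triangles:
  assumes X: "X \<in> Anti"
  shows "X = (\<Sum>a\<in>UNIV. \<Sum>b\<in>UNIV.
    (if a \<noteq> c0 \<and> b \<noteq> c0 \<and> a \<noteq> b then X $ a $ b / 2 else 0) *\<^sub>R skew_triangle c0 a b)"
    (is "X = ?S")
proof -
  let ?coef = "\<lambda>a b. if a \<noteq> c0 \<and> b \<noteq> c0 \<and> a \<noteq> b then X $ a $ b / 2 else 0"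
  have S_Anti: "?S \<in> Anti"
    by (intro subspace_sum[OF subspace_Anti] subspace_scale[OF subspace_Anti] skew_triangle_Anti)
  have S_entry: "?S $ i $ j = X $ i $ j" if "i \<noteq> c0" "j \<noteq> c0" "i \<noteq> j" for i j
  proof -
    have "?S $ i $ j = (\<Sum>a\<in>UNIV. \<Sum>b\<in>UNIV.
        (if a = i \<and> b = j then ?coef i j else 0) - (if a = j \<and> b = i then ?coef j i else 0))"
      unfolding sum_component vector_scaleR_component skew_triangle_entry skew_unit_entry
      using that by (intro sum.cong refl) auto
    also have "\<dots> = ?coef i j - ?coef j i"
      by (simp only: sum_subtractf sum_sum_delta_const)
    also have "\<dots> = X $ i $ j" using that AntiD(2)[OF X, of j i] by simp
    finally show ?thesis .
  qed
  note diff_Anti = subspace_diff[OF subspace_Anti X S_Anti]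
  have "X - ?S = 0"
  proof (rule Anti_eq_0_if_vanishes_off[OF diff_Anti])
    fix i j assume "i \<noteq> c0" "j \<noteq> c0"
    then show "(X - ?S) $ i $ j = 0"
      using S_entry[of i j] AntiD(3)[OF diff_Anti, of i] by (cases "i = j") auto
  qed
  then show ?thesis by simp
qed

text \<open>The tabloid of shape \<open>[n-2,1,1]\<close> with \<open>x\<close> in the second and \<open>y\<close> in the third row.\<close>

definition ordered_tabloid :: "'n \<Rightarrow> 'n \<Rightarrow> 'n \<Rightarrow> nat" where
  "ordered_tabloid x y = (\<lambda>z. if z = x then 1 else if z = y then 2 else 0)"

lemma ordered_tabloid_eq_iff:
  assumes "x \<noteq> y" "p \<noteq> q"
  shows "ordered_tabloid x y = ordered_tabloid p q \<longleftrightarrow> x = p \<and> y = q"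
proof
  assume h: "ordered_tabloid x y = ordered_tabloid p q"
  have "ordered_tabloid x y x = ordered_tabloid p q x" "ordered_tabloid x y y = ordered_tabloid p q y"
    using h by simp_all
  then show "x = p \<and> y = q" using assms by (auto simp: ordered_tabloid_def split: if_splits)
qed simp

lemma ordered_tabloid_comp_inv:
  "\<sigma> permutes UNIV \<Longrightarrow> ordered_tabloid (inv \<sigma> x) (inv \<sigma> y) \<circ> inv \<sigma> = ordered_tabloid x y"
  by (auto simp: ordered_tabloid_def fun_eq_iff dest: permutes_inv_eq_iff)

definition anti_coord :: "real^'n::finite^'n \<Rightarrow> ('n \<Rightarrow> nat) \<Rightarrow> real" where
  "anti_coord X = (\<lambda>r. \<Sum>x\<in>UNIV. \<Sum>y\<in>UNIV. if x \<noteq> y \<and> r = ordered_tabloid x y then X $ x $ y else 0)"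

lemma anti_coord_add: "anti_coord (X + Y) = (\<lambda>r. anti_coord X r + anti_coord Y r)"
  by (auto simp: anti_coord_def fun_eq_iff sum.distrib[symmetric] intro!: sum.cong)

lemma anti_coord_scale: "anti_coord (c *\<^sub>R X) = (\<lambda>r. c * anti_coord X r)"
  by (auto simp: anti_coord_def fun_eq_iff sum_distrib_left intro!: sum.cong)

lemma anti_coord_diff: "anti_coord (X - Y) = (\<lambda>r. anti_coord X r - anti_coord Y r)"
  by (auto simp: anti_coord_def fun_eq_iff sum_subtractf[symmetric] intro!: sum.cong)

lemma anti_coord_unit_mat:
  "anti_coord (unit_mat p q) = (\<lambda>r. if p \<noteq> q \<and> r = ordered_tabloid p q then 1 else 0)"
  unfolding anti_coord_def unit_mat_entry by (rule ext) (rule sum_sum_delta)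

lemma anti_coord_ordered_tabloid:
  assumes "p \<noteq> q"
  shows "anti_coord X (ordered_tabloid p q) = X $ p $ q"
proof -
  have "anti_coord X (ordered_tabloid p q) = (\<Sum>x\<in>UNIV. \<Sum>y\<in>UNIV.
      if x \<noteq> y \<and> ordered_tabloid p q = ordered_tabloid x y then (if x = p \<and> y = q then X $ p $ q else 0) else 0)"
    unfolding anti_coord_def using assms ordered_tabloid_eq_iff[OF assms]
    by (intro sum.cong refl) auto
  also have "\<dots> = X $ p $ q" using assms by (simp only: sum_sum_delta) simp
  finally show ?thesis .
qed

lemma anti_coord_conj_act:
  assumes s: "\<sigma> permutes UNIV"
  shows "anti_coord (conj_act \<sigma> X) = tab_act \<sigma> (anti_coord X)"
proof
  fix r
  let ?g = "\<lambda>x y. if x \<noteq> y \<and> r \<circ> \<sigma> = ordered_tabloid x y then X $ x $ y else 0"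
  have "anti_coord (conj_act \<sigma> X) r = (\<Sum>x\<in>UNIV. \<Sum>y\<in>UNIV. ?g (inv \<sigma> x) (inv \<sigma> y))"
    unfolding anti_coord_def conj_act_entry[OF s]
    by (intro sum.cong refl)
      (simp add: permutes_inv_eq_iff[OF s] comp_permutes_eq_iff[OF s] ordered_tabloid_comp_inv[OF s])
  also have "\<dots> = (\<Sum>x\<in>UNIV. \<Sum>y\<in>UNIV. ?g x y)"
    by (simp add: sum_permutes_inv[OF s, where f = "\<lambda>y. ?g _ y"]
        sum_permutes_inv[OF s, where f = "\<lambda>x. \<Sum>y\<in>UNIV. ?g x y"])
  also have "\<dots> = tab_act \<sigma> (anti_coord X) r" by (simp add: tab_act_def anti_coord_def)
  finally show "anti_coord (conj_act \<sigma> X) r = tab_act \<sigma> (anti_coord X) r" .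
qed

lemma anti_coord_eq_0_imp:
  assumes "X \<in> Anti" "anti_coord X = (\<lambda>r. 0)"
  shows "X = 0"
proof -
  have "X $ i $ j = 0" for i j
    using AntiD(3)[OF assms(1), of i] anti_coord_ordered_tabloid[of i j X] assms(2)
    by (cases "i = j") auto
  then show ?thesis by (simp add: vec_eq_iff)
qed

lemma anti_coord_skew_triangle:
  assumes "c \<noteq> a" "c \<noteq> b" "a \<noteq> b"
  shows "anti_coord (skew_triangle c a b) = (\<lambda>r.
      (if r = ordered_tabloid a b then 1 else 0) - (if r = ordered_tabloid b a then 1 else 0)
    + ((if r = ordered_tabloid b c then 1 else 0) - (if r = ordered_tabloid c b then 1 else 0))
    + ((if r = ordered_tabloid c a then 1 else 0) - (if r = ordered_tabloid a c then 1 else 0)))"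
  using assms
  by (simp add: skew_triangle_def skew_unit_def anti_coord_add anti_coord_diff anti_coord_unit_mat)

locale tableau_n11 =
  fixes t :: "'n::finite \<Rightarrow> nat \<times> nat"
  assumes tab: "t \<in> tableaux [CARD('n) - 2, 1, 1]"
    and card: "CARD('n) \<ge> 3"
begin

definition "c = inv t (0, 0)"
definition "a = inv t (1, 0)"
definition "b = inv t (2, 0)"

lemma t_c: "t c = (0, 0)" and t_a: "t a = (1, 0)" and t_b: "t b = (2, 0)"
  using card by (auto simp: a_def b_def c_def intro!: tableau_inv_apply[OF tab] simp: cells_three_rows)

lemma distinct: "c \<noteq> a" "c \<noteq> b" "a \<noteq> b"
  using t_a t_b t_c by auto

lemma t_eq_iff: "t x = t y \<longleftrightarrow> x = y"
  using tableauD(1)[OF tab] by (auto simp: inj_eq)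

lemma t_cases: "(fst (t x) = 0 \<and> snd (t x) < CARD('n) - 2) \<or> t x = (1, 0) \<or> t x = (2, 0)"
  using tableauD(2)[OF tab, of x] by (auto simp: cells_three_rows prod_eq_iff)

lemma tabloid: "tabloid_of t = ordered_tabloid a b"
proof
  fix z
  show "tabloid_of t z = ordered_tabloid a b z"
    using t_cases[of z] t_a t_b distinct t_eq_iff[of z a] t_eq_iff[of z b]
    by (auto simp: tabloid_of_def ordered_tabloid_def)
qed

lemma tabloid_permuted:
  assumes "\<pi> permutes UNIV"
  shows "tabloid_of (t \<circ> inv \<pi>) = ordered_tabloid (\<pi> a) (\<pi> b)"
  using ordered_tabloid_comp_inv[OF assms, of "\<pi> a" "\<pi> b"]
  by (simp add: tabloid_of_comp_inv tabloid permutes_inverses(2)[OF assms])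

lemma col_stab_eq: "col_stab t = {\<pi>. \<pi> permutes {c, a, b}}"
proof
  show "col_stab t \<subseteq> {\<pi>. \<pi> permutes {c, a, b}}"
  proof
    fix \<pi> assume p: "\<pi> \<in> col_stab t"
    have "\<pi> z = z" if "z \<notin> {c, a, b}" for z
    proof -
      have "fst (t z) = 0" "snd (t z) \<noteq> 0"
        using that t_cases[of z] t_a t_b t_c t_eq_iff by (metis insertCI prod.collapse)+
      then have "t (\<pi> z) = t z"
        using col_stabD(2)[OF p, of z] t_cases[of "\<pi> z"] by (auto simp: prod_eq_iff)
      then show ?thesis by (simp add: t_eq_iff)
    qed
    then show "\<pi> \<in> {\<pi>. \<pi> permutes {c, a, b}}"
      using permutes_superset[OF col_stabD(1)[OF p], of "{c, a, b}"] by auto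
  qed
  show "{\<pi>. \<pi> permutes {c, a, b}} \<subseteq> col_stab t"
  proof
    fix \<pi> assume "\<pi> \<in> {\<pi>. \<pi> permutes {c, a, b}}"
    then have p: "\<pi> permutes {c, a, b}" by simp
    have "snd (t (\<pi> x)) = snd (t x)" for x
    proof (cases "x \<in> {c, a, b}")
      case True
      then have "\<pi> x \<in> {c, a, b}" using permutes_in_image[OF p] by simp
      then show ?thesis using True t_a t_b t_c by auto
    next
      case False
      then show ?thesis using permutes_not_in[OF p False] by simp
    qed
    then show "\<pi> \<in> col_stab t" using permutes_subset[OF p] by (simp add: col_stab_def)
  qed
qed

lemma polytabloid_eq: "polytabloid t = (\<lambda>r.
      (if r = ordered_tabloid a b then 1 else 0) - (if r = ordered_tabloid b a then 1 else 0)
    + ((if r = ordered_tabloid b c then 1 else 0) - (if r = ordered_tabloid c b then 1 else 0))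
    + ((if r = ordered_tabloid c a then 1 else 0) - (if r = ordered_tabloid a c then 1 else 0)))"
proof
  fix r
  define F where "F \<pi> = (if ordered_tabloid (\<pi> a) (\<pi> b) = r then real_of_int (sign \<pi>) else 0)" for \<pi>
  have "polytabloid t r = (\<Sum>\<pi>\<in>{\<pi>. \<pi> permutes {c, a, b}}. F \<pi>)"
    unfolding polytabloid_def col_stab_eq F_def
    by (rule sum.cong) (auto simp: tabloid_permuted dest: permutes_subset[of _ _ UNIV])
  also have "\<dots> = (\<Sum>u\<in>{c, a, b}. \<Sum>v\<in>{a, b}. F (swap_perm c u \<circ> swap_perm a v))"
    using distinct by (simp add: sum_over_permutations_insert permutes_sing)
  also have "\<dots> = (if r = ordered_tabloid a b then 1 else 0) - (if r = ordered_tabloid b a then 1 else 0)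
    + ((if r = ordered_tabloid b c then 1 else 0) - (if r = ordered_tabloid c b then 1 else 0))
    + ((if r = ordered_tabloid c a then 1 else 0) - (if r = ordered_tabloid a c then 1 else 0))"
    using distinct
    by (simp add: F_def sign_compose permutation_swap_id sign_swap_id eq_commute[of "ordered_tabloid _ _" r])
  finally show "polytabloid t r = \<dots>" .
qed

end

lemma spechtIso_Anti:
  assumes card: "CARD('n::finite) \<ge> 3"
  shows "spechtIso (Anti :: (real^'n^'n) set) [CARD('n) - 2, 1, 1]"
proof (rule spechtIsoI[where f = anti_coord
      and G = "\<lambda>t. skew_triangle (tableau_n11.c t) (tableau_n11.a t) (tableau_n11.b t)"])
  let ?T = "tableaux [CARD('n) - 2, 1, 1] :: ('n \<Rightarrow> nat \<times> nat) set"
  let ?G = "\<lambda>t. skew_triangle (tableau_n11.c t) (tableau_n11.a t) (tableau_n11.b t)"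
  show "anti_coord (?G t) = polytabloid t" if "t \<in> ?T" for t
  proof -
    interpret tableau_n11 t using that card by unfold_locales
    show ?thesis using distinct by (simp add: anti_coord_skew_triangle polytabloid_eq)
  qed
  have triangle_in_span: "skew_triangle c0 a b \<in> span (?G ` ?T)" if ne: "a \<noteq> c0" "b \<noteq> c0" "a \<noteq> b" for c0 a b :: 'n
  proof -
    have "CARD('n) = card (cells [CARD('n) - 2, 1, 1])"
      using card by (simp add: card_cells_three_rows)
    then obtain t where t: "t \<in> ?T" "map t [c0, a, b] = [(0,0), (1,0), (2,0)]"
      using exists_tableau_map[of "[CARD('n) - 2, 1, 1]" "[c0, a, b]" "[(0,0), (1,0), (2,0)]"] ne card
      by (auto simp: cells_three_rows)
    interpret tableau_n11 t using t card by unfold_locales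
    have "c = c0" "a = tableau_n11.a t" "b = tableau_n11.b t"
      using t_eq_iff[of c c0] t_eq_iff[of a "tableau_n11.a t"] t_eq_iff[of b "tableau_n11.b t"] t_a t_b t_c t(2)
      by (auto simp: a_def)
    then show ?thesis by (intro span_base image_eqI[OF _ t(1)]) simp
  qed
  show "Anti \<subseteq> span (?G ` ?T)"
  proof
    fix X :: "real^'n^'n" assume X: "X \<in> Anti"
    obtain c0 :: 'n where True by blast
    have "(if a \<noteq> c0 \<and> b \<noteq> c0 \<and> a \<noteq> b then X $ a $ b / 2 else 0) *\<^sub>R skew_triangle c0 a b
        \<in> span (?G ` ?T)" for a b
      using triangle_in_span[of a c0 b] by (auto intro: span_scale simp: span_zero)
    then show "X \<in> span (?G ` ?T)"
      by (subst Anti_eq_sum_skew_triangles[OF X, of c0]) (intro span_sum)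
  qed
qed (use subspace_Anti conj_act_Anti anti_coord_add anti_coord_scale anti_coord_eq_0_imp
    anti_coord_conj_act skew_triangle_Anti in auto)

section \<open>The constituent \<open>{n-2,2}\<close>: symmetric matrices with zero diagonal\<close>

definition sym_unit :: "'n::finite \<Rightarrow> 'n \<Rightarrow> real^'n^'n" where
  "sym_unit p q = unit_mat p q + unit_mat q p"

definition sym_square :: "'n::finite \<Rightarrow> 'n \<Rightarrow> 'n \<Rightarrow> 'n \<Rightarrow> real^'n^'n" where
  "sym_square a b c d = sym_unit a b - sym_unit b c + sym_unit c d - sym_unit d a"

definition hollow_Symm :: "(real^'n::finite^'n) set" where
  "hollow_Symm = {X \<in> Symm. \<forall>i. X $ i $ i = 0}"

lemma sym_unit_entry:
  "sym_unit p q $ i $ j = (if i = p \<and> j = q then 1 else 0) + (if i = q \<and> j = p then 1 else 0)"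
  by (simp add: sym_unit_def unit_mat_entry)

lemma sym_square_entry:
  "sym_square a b c d $ i $ j
    = sym_unit a b $ i $ j - sym_unit b c $ i $ j + sym_unit c d $ i $ j - sym_unit d a $ i $ j"
  by (simp add: sym_square_def)

lemma hollow_Symm_iff:
  "X \<in> hollow_Symm \<longleftrightarrow>
    (\<forall>i. (\<Sum>j\<in>UNIV. X $ i $ j) = 0) \<and> (\<forall>i j. X $ i $ j = X $ j $ i) \<and> (\<forall>i. X $ i $ i = 0)"
  unfolding hollow_Symm_def Symm_iff by blast

lemma hollow_SymmD:
  assumes "X \<in> hollow_Symm"
  shows "(\<Sum>j\<in>UNIV. X $ i $ j) = 0" "X $ i $ j = X $ j $ i" "X $ i $ i = 0"
  using assms unfolding hollow_Symm_iff by blast+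

lemma hollow_Symm_subset_Symm: "hollow_Symm \<subseteq> Symm"
  by (auto simp: hollow_Symm_def)

lemma subspace_hollow_Symm: "subspace hollow_Symm"
  using subspace_Symm unfolding subspace_def hollow_Symm_def by auto

lemma sym_square_hollow_Symm:
  assumes "a \<noteq> b" "b \<noteq> c" "c \<noteq> d" "d \<noteq> a"
  shows "sym_square a b c d \<in> hollow_Symm"
proof -
  have row_sum: "(\<Sum>j\<in>UNIV. sym_unit p q $ i $ j) = (if i = p then 1 else 0) + (if i = q then 1 else 0)"
    for p q i
    unfolding sym_unit_def vector_add_component sum.distrib unit_mat_row_sum ..
  have sym: "sym_unit p q $ i $ j = sym_unit p q $ j $ i" for p q i j
    unfolding sym_unit_entry by (cases "i = p"; cases "j = q"; cases "i = q"; cases "j = p") simp_all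
  have "(\<Sum>j\<in>UNIV. sym_square a b c d $ i $ j) = 0" for i
    unfolding sym_square_entry sum.distrib sum_subtractf row_sum by simp
  moreover have "sym_square a b c d $ i $ j = sym_square a b c d $ j $ i" for i j
    unfolding sym_square_entry by (simp only: sym[of _ _ i j])
  moreover have "sym_square a b c d $ i $ i = 0" for i
    using assms unfolding sym_square_entry sym_unit_entry by (cases "i = a"; cases "i = b"; cases "i = c") auto
  ultimately show ?thesis unfolding hollow_Symm_iff by blast
qed

lemma conj_act_hollow_Symm:
  assumes s: "\<sigma> permutes UNIV" and X: "X \<in> hollow_Symm"
  shows "conj_act \<sigma> X \<in> hollow_Symm"
proof -
  have "(\<Sum>j\<in>UNIV. X $ inv \<sigma> i $ inv \<sigma> j) = 0" for i
    using hollow_SymmD(1)[OF X] sum_permutes_inv[OF s, where f = "\<lambda>j. X $ inv \<sigma> i $ j"] by simp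
  then show ?thesis
    unfolding hollow_Symm_iff conj_act_entry[OF s] using hollow_SymmD(2,3)[OF X] by blast
qed

lemma exists_three_distinct:
  assumes "CARD('n) \<ge> 3"
  obtains p q r :: "'n::finite" where "p \<noteq> q" "p \<noteq> r" "q \<noteq> r"
proof -
  obtain xs :: "'n list" where xs: "set xs = UNIV" "distinct xs"
    using finite_distinct_list[of "UNIV :: 'n set"] by auto
  then have "length xs \<ge> 3" using assms by (metis distinct_card)
  then have "xs ! i \<noteq> xs ! j" if "i < 3" "j < 3" "i \<noteq> j" for i j
    using nth_eq_iff_index_eq[OF xs(2), of i j] that by auto
  then show ?thesis by (intro that[of "xs ! 0" "xs ! 1" "xs ! 2"]) auto
qed

lemma sum_UNIV_three:
  assumes "p \<noteq> q" "p \<noteq> r" "q \<noteq> r" "\<And>j. j \<notin> {p, q, r} \<Longrightarrow> g j = 0"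
  shows "(\<Sum>j\<in>(UNIV::'n::finite set). (g j::real)) = g p + g q + g r"
proof -
  have "(\<Sum>j\<in>(UNIV::'n set). g j) = (\<Sum>j\<in>UNIV. (if j = p then g p else 0) + (if j = q then g q else 0)
      + (if j = r then g r else 0))"
    using assms by (intro sum.cong refl) (auto simp: insert_iff)
  then show ?thesis by (simp add: sum.distrib)
qed

text \<open>
  The row sums of a hollow symmetric matrix determine it from its block off \<open>{p, q}\<close> and
  one column \<open>p\<close> (outside \<open>y\<^sub>0\<close>).
\<close>

lemma hollow_Symm_eq_0_if_vanishes_off:
  assumes Z: "Z \<in> hollow_Symm" and d: "p \<noteq> q" "p \<noteq> y0" "q \<noteq> y0"
    and off: "\<And>i j. i \<notin> {p, q} \<Longrightarrow> j \<notin> {p, q} \<Longrightarrow> Z $ i $ j = 0"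
    and col: "\<And>y. y \<notin> {p, q, y0} \<Longrightarrow> Z $ y $ p = 0"
  shows "Z = 0"
proof -
  note row = hollow_SymmD(1)[OF Z] and sym = hollow_SymmD(2)[OF Z] and diag = hollow_SymmD(3)[OF Z]
  have row3: "Z $ y $ p + Z $ y $ q + Z $ y $ y0 = 0" if "\<And>j. j \<notin> {p, q, y0} \<Longrightarrow> Z $ y $ j = 0" for y
    using row[of y] sum_UNIV_three[OF d, of "\<lambda>j. Z $ y $ j"] that by simp
  have yq: "Z $ y $ q = - Z $ y $ p" if "y \<notin> {p, q}" for y
    using row3[of y] off[OF that] off[OF that, of y0] diag[of y] that d by (cases "y = y0") auto
  have yq0: "Z $ y $ q = 0" if "y \<notin> {p, q, y0}" for y
    using yq[of y] col[OF that] that by simp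
  have "Z $ p $ j = 0" "Z $ q $ j = 0" if "j \<notin> {p, q, y0}" for j
    using col[OF that] yq0[OF that] sym[of p j] sym[of q j] by simp_all
  then have "Z $ p $ q + Z $ p $ y0 = 0" "Z $ q $ p + Z $ q $ y0 = 0"
    using row3[of p] row3[of q] diag[of p] diag[of q] by simp_all
  moreover have "Z $ y0 $ p + Z $ y0 $ q = 0"
    using yq[of y0] d by simp
  ultimately have pq: "Z $ p $ q = 0" and py: "Z $ p $ y0 = 0" and qy: "Z $ q $ y0 = 0"
    using sym[of y0 p] sym[of y0 q] sym[of q p] by linarith+
  have col_p: "Z $ y $ p = 0" for y
    using col[of y] diag[of p] pq py sym[of q p] sym[of y0 p] by (cases "y = p \<or> y = q \<or> y = y0") auto
  have col_q: "Z $ y $ q = 0" for y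
    using yq0[of y] diag[of q] pq qy sym[of q p] sym[of y0 q] by (cases "y = p \<or> y = q \<or> y = y0") auto
  have "Z $ i $ j = 0" for i j
    using off[of i j] col_p[of j] col_q[of j] col_p[of i] col_q[of i] sym[of i j]
    by (cases "j \<in> {p, q}"; cases "i \<in> {p, q}") auto
  then show ?thesis by (simp add: vec_eq_iff)
qed

abbreviation sym_squares_span :: "(real^'n::finite^'n) set" where
  "sym_squares_span \<equiv> span {sym_square x y u v | x y u v. distinct [x, y, u, v]}"

lemma sym_square_in_span: "distinct [x, y, u, v] \<Longrightarrow> sym_square x y u v \<in> sym_squares_span"
  by (intro span_base) blast

lemma hollow_Symm_reduce_off_block:
  fixes X :: "real^'n::finite^'n"
  assumes X: "X \<in> hollow_Symm" and pq: "p \<noteq> q"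
  obtains S where "S \<in> sym_squares_span" "X - S \<in> hollow_Symm"
    "\<And>i j. i \<notin> {p, q} \<Longrightarrow> j \<notin> {p, q} \<Longrightarrow> (X - S) $ i $ j = 0"
proof -
  define coef where "coef x y = (if x \<notin> {p, q} \<and> y \<notin> {p, q} \<and> x \<noteq> y then X $ x $ y / 2 else 0)" for x y
  define S where "S = (\<Sum>x\<in>UNIV. \<Sum>y\<in>UNIV. coef x y *\<^sub>R sym_square x y p q)"
  have S_span: "S \<in> sym_squares_span"
    unfolding S_def coef_def using pq sym_square_in_span
    by (intro span_sum) (auto intro!: span_scale simp: span_zero)
  have S_hollow: "S \<in> hollow_Symm"
    unfolding S_def coef_def using pq sym_square_hollow_Symm
    by (intro subspace_sum[OF subspace_hollow_Symm])
      (auto intro!: subspace_scale[OF subspace_hollow_Symm] simp: subspace_0[OF subspace_hollow_Symm])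
  have S_entry: "S $ i $ j = X $ i $ j" if "i \<notin> {p, q}" "j \<notin> {p, q}" "i \<noteq> j" for i j
  proof -
    have "S $ i $ j = (\<Sum>x\<in>UNIV. \<Sum>y\<in>UNIV. (if x = i \<and> y = j then coef i j else 0)
        + (if x = j \<and> y = i then coef j i else 0))"
      unfolding S_def sum_component vector_scaleR_component
      by (intro sum.cong refl) (use that in \<open>auto simp: sym_square_entry sym_unit_entry\<close>)
    also have "\<dots> = coef i j + coef j i" by (simp only: sum.distrib sum_sum_delta_const)
    also have "\<dots> = X $ i $ j" using that hollow_SymmD(2)[OF X, of j i] by (simp add: coef_def)
    finally show ?thesis .
  qed
  note XS = subspace_diff[OF subspace_hollow_Symm X S_hollow]
  have "(X - S) $ i $ j = 0" if "i \<notin> {p, q}" "j \<notin> {p, q}" for i j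
    using S_entry[OF that] hollow_SymmD(3)[OF XS, of i] by (cases "i = j") auto
  then show ?thesis using S_span XS that by blast
qed

lemma hollow_Symm_block_free_in_span:
  fixes Y :: "real^'n::finite^'n"
  assumes Y: "Y \<in> hollow_Symm" and d: "p \<noteq> q" "p \<noteq> y0" "q \<noteq> y0"
    and off: "\<And>i j. i \<notin> {p, q} \<Longrightarrow> j \<notin> {p, q} \<Longrightarrow> Y $ i $ j = 0"
  shows "Y \<in> sym_squares_span"
proof -
  define coef where "coef y = (if y \<notin> {p, q, y0} then Y $ y $ p else 0)" for y
  define S where "S = (\<Sum>y\<in>UNIV. coef y *\<^sub>R sym_square y p y0 q)"
  have S_span: "S \<in> sym_squares_span"
    unfolding S_def coef_def using d sym_square_in_span
    by (intro span_sum) (auto intro!: span_scale simp: span_zero)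
  have S_hollow: "S \<in> hollow_Symm"
    unfolding S_def coef_def using d
    by (intro subspace_sum[OF subspace_hollow_Symm])
      (auto intro!: subspace_scale[OF subspace_hollow_Symm] sym_square_hollow_Symm
        simp: subspace_0[OF subspace_hollow_Symm])
  have S_off: "S $ i $ j = 0" if "i \<notin> {p, q}" "j \<notin> {p, q}" for i j
    unfolding S_def sum_component
    by (rule sum.neutral) (use that in \<open>simp add: sym_square_entry sym_unit_entry\<close>)
  have S_col: "S $ y $ p = Y $ y $ p" if "y \<notin> {p, q, y0}" for y
  proof -
    have "S $ y $ p = (\<Sum>y'\<in>UNIV. if y' = y then coef y else 0)"
      unfolding S_def sum_component
      by (intro sum.cong refl) (use that d in \<open>auto simp: sym_square_entry sym_unit_entry\<close>)
    then show ?thesis using that by (simp add: coef_def)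
  qed
  have "Y - S = 0"
    by (rule hollow_Symm_eq_0_if_vanishes_off[OF subspace_diff[OF subspace_hollow_Symm Y S_hollow] d])
      (simp_all add: off S_off S_col)
  then show ?thesis using S_span by simp
qed

lemma hollow_Symm_in_span_sym_squares:
  fixes X :: "real^'n::finite^'n" and p q y0 :: 'n
  assumes X: "X \<in> hollow_Symm" and d: "p \<noteq> q" "p \<noteq> y0" "q \<noteq> y0"
  shows "X \<in> sym_squares_span"
proof -
  obtain S where S: "S \<in> sym_squares_span" "X - S \<in> hollow_Symm"
    "\<And>i j. i \<notin> {p, q} \<Longrightarrow> j \<notin> {p, q} \<Longrightarrow> (X - S) $ i $ j = 0"
    using hollow_Symm_reduce_off_block[OF X d(1)] by blast
  then have "X - S \<in> sym_squares_span" using hollow_Symm_block_free_in_span[OF S(2) d] by blast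
  then show ?thesis using span_add[OF S(1)] by fastforce
qed

text \<open>The tabloid of shape \<open>[n-2,2]\<close> with \<open>x, y\<close> in the second row.\<close>

definition pair_tabloid :: "'n \<Rightarrow> 'n \<Rightarrow> 'n \<Rightarrow> nat" where
  "pair_tabloid x y = (\<lambda>z. if z = x \<or> z = y then 1 else 0)"

lemma pair_tabloid_commute: "pair_tabloid x y = pair_tabloid y x"
  by (auto simp: pair_tabloid_def fun_eq_iff)

lemma pair_tabloid_eqD:
  assumes "pair_tabloid p q = pair_tabloid x y" "x \<noteq> y" "p \<noteq> q"
  shows "(x = p \<and> y = q) \<or> (x = q \<and> y = p)"
proof -
  have "x = p \<or> x = q" "y = p \<or> y = q"
    using fun_cong[OF assms(1), of x] fun_cong[OF assms(1), of y]
    unfolding pair_tabloid_def by (metis zero_neq_one)+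
  then show ?thesis using assms(2) by blast
qed

lemma pair_tabloid_comp_inv:
  "\<sigma> permutes UNIV \<Longrightarrow> pair_tabloid (inv \<sigma> x) (inv \<sigma> y) \<circ> inv \<sigma> = pair_tabloid x y"
  by (auto simp: pair_tabloid_def fun_eq_iff dest: permutes_inv_eq_iff)

text \<open>Each unordered pair is counted twice, hence the factor \<open>1/2\<close>.\<close>

definition hollow_coord :: "real^'n::finite^'n \<Rightarrow> ('n \<Rightarrow> nat) \<Rightarrow> real" where
  "hollow_coord X = (\<lambda>r. \<Sum>x\<in>UNIV. \<Sum>y\<in>UNIV. if x \<noteq> y \<and> r = pair_tabloid x y then X $ x $ y / 2 else 0)"

lemma hollow_coord_add: "hollow_coord (X + Y) = (\<lambda>r. hollow_coord X r + hollow_coord Y r)"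
  by (auto simp: hollow_coord_def fun_eq_iff sum.distrib[symmetric] add_divide_distrib intro!: sum.cong)

lemma hollow_coord_scale: "hollow_coord (c *\<^sub>R X) = (\<lambda>r. c * hollow_coord X r)"
  by (auto simp: hollow_coord_def fun_eq_iff sum_distrib_left intro!: sum.cong)

lemma hollow_coord_diff: "hollow_coord (X - Y) = (\<lambda>r. hollow_coord X r - hollow_coord Y r)"
  by (auto simp: hollow_coord_def fun_eq_iff sum_subtractf[symmetric] diff_divide_distrib intro!: sum.cong)

lemma hollow_coord_unit_mat:
  "hollow_coord (unit_mat p q) = (\<lambda>r. if p \<noteq> q \<and> r = pair_tabloid p q then 1/2 else 0)"
proof
  fix r
  have "hollow_coord (unit_mat p q) r = (\<Sum>x\<in>UNIV. \<Sum>y\<in>UNIV.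
      if x \<noteq> y \<and> r = pair_tabloid x y then (if x = p \<and> y = q then 1/2 else 0) else 0)"
    unfolding hollow_coord_def unit_mat_entry by (intro sum.cong refl) auto
  then show "hollow_coord (unit_mat p q) r = (if p \<noteq> q \<and> r = pair_tabloid p q then 1/2 else 0)"
    by (simp only: sum_sum_delta)
qed

lemma hollow_coord_sym_unit:
  "hollow_coord (sym_unit p q) = (\<lambda>r. if p \<noteq> q \<and> r = pair_tabloid p q then 1 else 0)"
  by (auto simp: sym_unit_def hollow_coord_add hollow_coord_unit_mat fun_eq_iff pair_tabloid_commute)

lemma hollow_coord_sym_square:
  assumes "a \<noteq> b" "b \<noteq> c" "c \<noteq> d" "d \<noteq> a"
  shows "hollow_coord (sym_square a b c d) = (\<lambda>r.
      (if r = pair_tabloid a b then 1 else 0) - (if r = pair_tabloid b c then 1 else 0)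
    + (if r = pair_tabloid c d then 1 else 0) - (if r = pair_tabloid d a then 1 else 0))"
  using assms by (simp add: sym_square_def hollow_coord_add hollow_coord_diff hollow_coord_sym_unit)

lemma hollow_coord_pair_tabloid:
  assumes "p \<noteq> q" "X \<in> hollow_Symm"
  shows "hollow_coord X (pair_tabloid p q) = X $ p $ q"
proof -
  have "hollow_coord X (pair_tabloid p q) = (\<Sum>x\<in>UNIV. \<Sum>y\<in>UNIV.
      (if x = p \<and> y = q then X $ p $ q / 2 else 0) + (if x = q \<and> y = p then X $ q $ p / 2 else 0))"
    unfolding hollow_coord_def using assms(1)
    by (intro sum.cong refl) (auto dest: pair_tabloid_eqD simp: pair_tabloid_commute)
  also have "\<dots> = X $ p $ q / 2 + X $ q $ p / 2" by (simp only: sum.distrib sum_sum_delta_const)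
  also have "\<dots> = X $ p $ q" using hollow_SymmD(2)[OF assms(2), of q p] by simp
  finally show ?thesis .
qed

lemma hollow_coord_eq_0_imp:
  assumes "X \<in> hollow_Symm" "hollow_coord X = (\<lambda>r. 0)"
  shows "X = 0"
proof -
  have "X $ i $ j = 0" for i j
    using hollow_SymmD(3)[OF assms(1), of i] hollow_coord_pair_tabloid[of i j X] assms
    by (cases "i = j") auto
  then show ?thesis by (simp add: vec_eq_iff)
qed

lemma hollow_coord_conj_act:
  assumes s: "\<sigma> permutes UNIV"
  shows "hollow_coord (conj_act \<sigma> X) = tab_act \<sigma> (hollow_coord X)"
proof
  fix r
  let ?g = "\<lambda>x y. if x \<noteq> y \<and> r \<circ> \<sigma> = pair_tabloid x y then X $ x $ y / 2 else 0"
  have "hollow_coord (conj_act \<sigma> X) r = (\<Sum>x\<in>UNIV. \<Sum>y\<in>UNIV. ?g (inv \<sigma> x) (inv \<sigma> y))"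
    unfolding hollow_coord_def conj_act_entry[OF s]
    by (intro sum.cong refl)
      (simp add: permutes_inv_eq_iff[OF s] comp_permutes_eq_iff[OF s] pair_tabloid_comp_inv[OF s])
  also have "\<dots> = (\<Sum>x\<in>UNIV. \<Sum>y\<in>UNIV. ?g x y)"
    by (simp add: sum_permutes_inv[OF s, where f = "\<lambda>y. ?g _ y"]
        sum_permutes_inv[OF s, where f = "\<lambda>x. \<Sum>y\<in>UNIV. ?g x y"])
  also have "\<dots> = tab_act \<sigma> (hollow_coord X) r" by (simp add: tab_act_def hollow_coord_def)
  finally show "hollow_coord (conj_act \<sigma> X) r = tab_act \<sigma> (hollow_coord X) r" .
qed

locale tableau_n2 =
  fixes t :: "'n::finite \<Rightarrow> nat \<times> nat"
  assumes tab: "t \<in> tableaux [CARD('n) - 2, 2]"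
    and card: "CARD('n) \<ge> 4"
begin

definition "c = inv t (0, 0)"
definition "d = inv t (0, 1)"
definition "a = inv t (1, 0)"
definition "b = inv t (1, 1)"

lemma t_c: "t c = (0, 0)" and t_d: "t d = (0, 1)" and t_a: "t a = (1, 0)" and t_b: "t b = (1, 1)"
  using card by (auto simp: a_def b_def c_def d_def intro!: tableau_inv_apply[OF tab] simp: cells_two_rows)

lemma distinct: "c \<noteq> a" "c \<noteq> b" "a \<noteq> b" "c \<noteq> d" "a \<noteq> d" "b \<noteq> d"
  using t_a t_b t_c t_d by auto

lemma t_eq_iff: "t x = t y \<longleftrightarrow> x = y"
  using tableauD(1)[OF tab] by (auto simp: inj_eq)

lemma t_cases: "(fst (t x) = 0 \<and> snd (t x) < CARD('n) - 2) \<or> (fst (t x) = 1 \<and> snd (t x) < 2)"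
  using tableauD(2)[OF tab, of x] by (simp add: cells_two_rows)

lemma tabloid: "tabloid_of t = pair_tabloid a b"
proof
  fix z
  show "tabloid_of t z = pair_tabloid a b z"
  proof (cases "z = a \<or> z = b")
    case False
    then have "t z \<noteq> (1, 0)" "t z \<noteq> (1, 1)" using t_a t_b t_eq_iff by metis+
    then have "fst (t z) = 0" using t_cases[of z] by (auto simp: prod_eq_iff less_2_cases_iff)
    then show ?thesis using False by (auto simp: tabloid_of_def pair_tabloid_def)
  qed (auto simp: tabloid_of_def pair_tabloid_def t_a t_b)
qed

lemma tabloid_permuted:
  assumes "\<pi> permutes UNIV"
  shows "tabloid_of (t \<circ> inv \<pi>) = pair_tabloid (\<pi> a) (\<pi> b)"
  using pair_tabloid_comp_inv[OF assms, of "\<pi> a" "\<pi> b"]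
  by (simp add: tabloid_of_comp_inv tabloid permutes_inverses(2)[OF assms])

lemma column_0: "snd (t x) = 0 \<longleftrightarrow> x = c \<or> x = a"
proof
  assume "snd (t x) = 0"
  then have "t x = t c \<or> t x = t a" using t_cases[of x] by (auto simp: prod_eq_iff t_c t_a)
  then show "x = c \<or> x = a" by (simp only: t_eq_iff)
qed (auto simp: t_c t_a)

lemma column_1: "snd (t x) = 1 \<longleftrightarrow> x = d \<or> x = b"
proof
  assume "snd (t x) = 1"
  then have "t x = t d \<or> t x = t b" using t_cases[of x] by (auto simp: prod_eq_iff t_d t_b)
  then show "x = d \<or> x = b" by (simp only: t_eq_iff)
qed (auto simp: t_d t_b)

lemma col_stab_fixes_others:
  assumes "\<pi> \<in> col_stab t" "z \<notin> {c, a, d, b}"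
  shows "\<pi> z = z"
proof -
  have "snd (t z) \<noteq> 0" "snd (t z) \<noteq> 1" using assms(2) column_0 column_1 by auto
  moreover have "snd (t (\<pi> z)) = snd (t z)" by (rule col_stabD(2)[OF assms(1)])
  ultimately have "t (\<pi> z) = t z" using t_cases[of z] t_cases[of "\<pi> z"] by (auto simp: prod_eq_iff)
  then show ?thesis by (simp add: t_eq_iff)
qed

lemma col_stab_eq: "col_stab t = {id, swap_perm c a, swap_perm d b, swap_perm c a \<circ> swap_perm d b}"
proof
  show "col_stab t \<subseteq> {id, swap_perm c a, swap_perm d b, swap_perm c a \<circ> swap_perm d b}"
  proof
    fix \<pi> assume p: "\<pi> \<in> col_stab t"
    have images: "\<pi> a = c \<or> \<pi> a = a" "\<pi> c = c \<or> \<pi> c = a" "\<pi> b = d \<or> \<pi> b = b" "\<pi> d = d \<or> \<pi> d = b"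
      using col_stabD(2)[OF p] column_0 column_1 t_a t_b t_c t_d by (metis fst_conv snd_conv)+
    have ne: "\<pi> c \<noteq> \<pi> a" "\<pi> d \<noteq> \<pi> b"
      using permutes_inj[OF col_stabD(1)[OF p]] distinct by (simp_all add: inj_eq)
    have agree: "\<pi> = f" if "\<pi> a = f a" "\<pi> c = f c" "\<pi> b = f b" "\<pi> d = f d"
      and "\<And>z. z \<notin> {c, a, d, b} \<Longrightarrow> f z = z" for f
    proof
      fix z show "\<pi> z = f z"
        using that col_stab_fixes_others[OF p, of z] by (cases "z \<in> {c, a, d, b}") auto
    qed
    consider "\<pi> a = a" "\<pi> b = b" | "\<pi> a = c" "\<pi> b = b" | "\<pi> a = a" "\<pi> b = d" | "\<pi> a = c" "\<pi> b = d"
      using images(1,3) by blast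
    then show "\<pi> \<in> {id, swap_perm c a, swap_perm d b, swap_perm c a \<circ> swap_perm d b}"
    proof cases
      case 1
      then have "\<pi> = id" using images ne by (intro agree) auto
      then show ?thesis by blast
    next
      case 2
      then have "\<pi> = swap_perm c a"
        using images ne distinct by (intro agree) (auto simp: Transposition.transpose_def)
      then show ?thesis by blast
    next
      case 3
      then have "\<pi> = swap_perm d b"
        using images ne distinct by (intro agree) (auto simp: Transposition.transpose_def)
      then show ?thesis by blast
    next
      case 4
      then have "\<pi> = swap_perm c a \<circ> swap_perm d b"
        using images ne distinct by (intro agree) (auto simp: Transposition.transpose_def)
      then show ?thesis by blast
    qed
  qed
  have "snd (t (swap_perm c a x)) = snd (t x)" "snd (t (swap_perm d b x)) = snd (t x)" for x
    using t_a t_b t_c t_d by (auto simp: Transposition.transpose_def)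
  then show "{id, swap_perm c a, swap_perm d b, swap_perm c a \<circ> swap_perm d b} \<subseteq> col_stab t"
    using id_in_col_stab by (auto simp: col_stab_def permutes_swap_id permutes_compose)
qed

lemma polytabloid_eq: "polytabloid t = (\<lambda>r.
      (if r = pair_tabloid a b then 1 else 0) - (if r = pair_tabloid b c then 1 else 0)
    + (if r = pair_tabloid c d then 1 else 0) - (if r = pair_tabloid d a then 1 else 0))"
proof
  fix r
  have ne: "id \<noteq> swap_perm c a" "id \<noteq> swap_perm d b" "id \<noteq> swap_perm c a \<circ> swap_perm d b"
    "swap_perm c a \<noteq> swap_perm d b" "swap_perm c a \<noteq> swap_perm c a \<circ> swap_perm d b"
    "swap_perm d b \<noteq> swap_perm c a \<circ> swap_perm d b"
    using distinct by (metis comp_apply id_apply transpose_apply_other transpose_apply_second)+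
  have "polytabloid t r = (\<Sum>\<pi>\<in>col_stab t. if pair_tabloid (\<pi> a) (\<pi> b) = r then real_of_int (sign \<pi>) else 0)"
    unfolding polytabloid_def by (intro sum.cong refl) (simp add: tabloid_permuted col_stabD(1))
  also have "\<dots> = (if r = pair_tabloid a b then 1 else 0) - (if r = pair_tabloid b c then 1 else 0)
    + (if r = pair_tabloid c d then 1 else 0) - (if r = pair_tabloid d a then 1 else 0)"
    unfolding col_stab_eq using ne distinct
    by (simp add: sign_compose permutation_swap_id sign_swap_id eq_commute[of "pair_tabloid _ _" r]
        pair_tabloid_commute)
  finally show "polytabloid t r = \<dots>" .
qed

end

lemma spechtIso_hollow_Symm:
  assumes card: "CARD('n::finite) \<ge> 4"
  shows "spechtIso (hollow_Symm :: (real^'n^'n) set) [CARD('n) - 2, 2]"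
proof (rule spechtIsoI[where f = hollow_coord
      and G = "\<lambda>t. sym_square (tableau_n2.a t) (tableau_n2.b t) (tableau_n2.c t) (tableau_n2.d t)"])
  let ?G = "\<lambda>t. sym_square (tableau_n2.a t) (tableau_n2.b t) (tableau_n2.c t) (tableau_n2.d t)"
  let ?T = "tableaux [CARD('n) - 2, 2] :: ('n \<Rightarrow> nat \<times> nat) set"
  show "?G t \<in> hollow_Symm" if "t \<in> ?T" for t
  proof -
    interpret tableau_n2 t using that card by unfold_locales
    show ?thesis using distinct by (intro sym_square_hollow_Symm) auto
  qed
  show "hollow_coord (?G t) = polytabloid t" if "t \<in> ?T" for t
  proof -
    interpret tableau_n2 t using that card by unfold_locales
    show ?thesis using distinct by (simp add: hollow_coord_sym_square polytabloid_eq)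
  qed
  have square_in_span: "sym_square x y u v \<in> span (?G ` ?T)" if ne: "distinct [x, y, u, v]" for x y u v
  proof -
    have "CARD('n) = card (cells [CARD('n) - 2, 2])" "1 < CARD('n) - 2"
      using card by (simp_all add: card_cells_two_rows)
    then obtain t where t: "t \<in> ?T" "map t [x, y, u, v] = [(1,0), (1,1), (0,0), (0,1)]"
      using exists_tableau_map[of "[CARD('n) - 2, 2]" "[x, y, u, v]" "[(1,0), (1,1), (0,0), (0,1)]"] ne card
      by (auto simp: cells_two_rows)
    interpret tableau_n2 t using t card by unfold_locales
    have "a = x" "b = y" "c = u" "d = v"
      using t_eq_iff[of a x] t_eq_iff[of b y] t_eq_iff[of c u] t_eq_iff[of d v] t_a t_b t_c t_d t(2) by auto
    then show ?thesis by (intro span_base image_eqI[OF _ t(1)]) simp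
  qed
  show "hollow_Symm \<subseteq> span (?G ` ?T)"
  proof
    fix X :: "real^'n^'n" assume X: "X \<in> hollow_Symm"
    have "CARD('n) \<ge> 3" using card by simp
    then obtain p q y0 :: 'n where "p \<noteq> q" "p \<noteq> y0" "q \<noteq> y0"
      by (rule exists_three_distinct)
    then have "X \<in> span {sym_square x y u v | x y u v. distinct [x, y, u, v]}"
      by (rule hollow_Symm_in_span_sym_squares[OF X])
    moreover have "span {sym_square x y u v | x y u v. distinct [x, y, u, v]} \<subseteq> span (?G ` ?T)"
      using square_in_span by (intro span_minimal[OF _ subspace_span]) blast
    ultimately show "X \<in> span (?G ` ?T)" by blast
  qed
qed (use subspace_hollow_Symm conj_act_hollow_Symm hollow_coord_add hollow_coord_scale
    hollow_coord_eq_0_imp hollow_coord_conj_act in auto)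

section \<open>The decompositions\<close>

lemma trace_Anti: "X \<in> Anti \<Longrightarrow> trace X = 0"
  by (simp add: trace_def AntiD(3))

lemma trace_hollow_Symm: "X \<in> hollow_Symm \<Longrightarrow> trace X = 0"
  by (simp add: trace_def hollow_SymmD(3))

lemma trace_col_mat: "sum u UNIV = 0 \<Longrightarrow> trace (col_mat u) = 0"
  by (simp add: trace_def col_mat_entry)

lemma trace_sym_std_mat: "sum u UNIV = 0 \<Longrightarrow> trace (sym_std_mat u :: real^'n::finite^'n) = 0"
  by (simp add: trace_def sym_std_mat_entry sum_subtractf sum_distrib_left[symmetric])

lemma sym_std_mat_Symm:
  assumes "sum u UNIV = 0"
  shows "(sym_std_mat u :: real^'n::finite^'n) \<in> Symm"
proof -
  have "(\<Sum>j\<in>UNIV. (sym_std_mat u :: real^'n^'n) $ i $ j)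
      = (\<Sum>j\<in>UNIV. (if j = i then real CARD('n) * u i else 0) - u i - u j)" for i
    by (rule sum.cong) (auto simp: sym_std_mat_entry)
  then have "(\<Sum>j\<in>UNIV. (sym_std_mat u :: real^'n^'n) $ i $ j) = 0" for i
    using assms by (simp add: sum_subtractf)
  moreover have "(sym_std_mat u :: real^'n^'n) $ i $ j = sym_std_mat u $ j $ i" for i j
    by (auto simp: sym_std_mat_entry)
  ultimately show ?thesis unfolding Symm_iff by blast
qed

lemma triv_comp_Int_trace_zero:
  assumes "CARD('n::finite) \<ge> 2" "U \<subseteq> {X :: real^'n^'n. trace X = 0}"
  shows "triv_comp \<inter> U \<subseteq> {0}"
  using assms triv_comp_trace_zero by blast

lemma sym_std_comp_Int_zero_diag:
  assumes "CARD('n::finite) \<ge> 3" "U \<subseteq> {X :: real^'n^'n. \<forall>i. X $ i $ i = 0}"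
  shows "sym_std_comp \<inter> U \<subseteq> {0}"
proof
  fix X assume "X \<in> sym_std_comp \<inter> U"
  then obtain u where u: "X = sym_std_mat u" "sum u UNIV = 0" "\<forall>i. X $ i $ i = 0"
    using assms(2) unfolding sym_std_comp_def by blast
  have "(real CARD('n) - 2) * u i = 0" for i
    using u(3)[rule_format, of i] by (simp add: u(1) sym_std_mat_entry algebra_simps)
  then have "u = (\<lambda>i. 0)" using assms(1) by (simp add: fun_eq_iff)
  then show "X \<in> {0}" by (simp add: u(1) sym_std_mat_def vec_eq_iff)
qed

lemma col_comp_Int_Symm: "col_comp \<inter> Symm \<subseteq> {0 :: real^'n::finite^'n}"
proof
  fix X :: "real^'n^'n" assume "X \<in> col_comp \<inter> Symm"
  then obtain u where u: "X = col_mat u" "sum u UNIV = 0" and "X \<in> Symm"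
    unfolding col_comp_def by blast
  then have const: "u j = u i" for i j using SymmD(2)[of X i j] by (simp add: col_mat_entry)
  have "sum u UNIV = (\<Sum>j\<in>(UNIV :: 'n set). u i)" for i using const[of _ i] by (intro sum.cong) auto
  then have "sum u UNIV = real CARD('n) * u i" for i by simp
  then have "u = (\<lambda>i. 0)" using u(2) by (simp add: fun_eq_iff)
  then show "X \<in> {0}" by (simp add: u(1) col_mat_def vec_eq_iff)
qed

text \<open>The multiple of \<open>J - nI\<close> is read off from the trace, then \<open>u\<close> from the diagonal.\<close>

lemma Symm_decomp:
  assumes card: "CARD('n::finite) \<ge> 3"
  shows "(Symm :: (real^'n^'n) set) = setsum_sp triv_comp (setsum_sp sym_std_comp hollow_Symm)"
proof
  let ?N = "real CARD('n)"
  have nz: "?N - ?N * ?N \<noteq> 0" "?N - 2 \<noteq> 0"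
    using card card_minus_square_neq_zero[where 'n = 'n] by auto
  show "(Symm :: (real^'n^'n) set) \<subseteq> setsum_sp triv_comp (setsum_sp sym_std_comp hollow_Symm)"
  proof
    fix X :: "real^'n^'n" assume X: "X \<in> Symm"
    define k where "k = trace X / (?N - ?N * ?N)"
    define u where "u i = (X $ i $ i - k * (1 - ?N)) / (?N - 2)" for i
    define Z where "Z = X - k *\<^sub>R J_minus_nI - sym_std_mat u"
    have "sum u UNIV = (trace X - ?N * (k * (1 - ?N))) / (?N - 2)"
      unfolding u_def trace_def by (simp add: sum_divide_distrib[symmetric] sum_subtractf)
    also have "\<dots> = (trace X - k * (?N - ?N * ?N)) / (?N - 2)" by (simp add: algebra_simps)
    also have "\<dots> = 0" using nz by (simp add: k_def)
    finally have u_sum: "sum u UNIV = 0" .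
    have "Z \<in> Symm" unfolding Z_def
      by (intro subspace_diff[OF subspace_Symm] X subspace_scale[OF subspace_Symm]
          J_minus_nI_Symm sym_std_mat_Symm u_sum)
    moreover have "Z $ i $ i = 0" for i
    proof -
      have "Z $ i $ i = X $ i $ i - k * (1 - ?N) - (?N - 2) * u i"
        by (simp add: Z_def J_minus_nI_entry sym_std_mat_entry algebra_simps)
      also have "\<dots> = 0" using nz by (simp add: u_def)
      finally show ?thesis .
    qed
    ultimately have "Z \<in> hollow_Symm" by (simp add: hollow_Symm_def)
    moreover have "X = k *\<^sub>R J_minus_nI + (sym_std_mat u + Z)" by (simp add: Z_def)
    ultimately show "X \<in> setsum_sp triv_comp (setsum_sp sym_std_comp hollow_Symm)"
      using u_sum unfolding setsum_sp_def triv_comp_def sym_std_comp_def by blast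
  qed
  show "setsum_sp triv_comp (setsum_sp sym_std_comp hollow_Symm) \<subseteq> (Symm :: (real^'n^'n) set)"
    using triv_comp_Symm sym_std_mat_Symm hollow_Symm_subset_Symm
    by (intro setsum_sp_subset[OF subspace_Symm]) (auto simp: sym_std_comp_def)
qed

lemma DS_eq_Symm_plus_Anti: "(DS :: (real^'n::finite^'n) set) = setsum_sp Symm Anti"
proof
  show "(DS :: (real^'n^'n) set) \<subseteq> setsum_sp Symm Anti"
  proof
    fix X :: "real^'n^'n" assume X: "X \<in> DS"
    have rows_cols: "(\<Sum>j\<in>UNIV. X $ i $ j) = 0" "(\<Sum>j\<in>UNIV. X $ j $ i) = 0" for i
      using X by (auto simp: DS_iff)
    have "(\<Sum>j\<in>UNIV. ((1/2) *\<^sub>R (X + transpose X)) $ i $ j)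
        = ((\<Sum>j\<in>UNIV. X $ i $ j) + (\<Sum>j\<in>UNIV. X $ j $ i)) / 2"
      "(\<Sum>j\<in>UNIV. ((1/2) *\<^sub>R (X - transpose X)) $ i $ j)
        = ((\<Sum>j\<in>UNIV. X $ i $ j) - (\<Sum>j\<in>UNIV. X $ j $ i)) / 2" for i
      by (simp_all add: transpose_entry sum.distrib sum_subtractf sum_divide_distrib[symmetric])
    then have "(1/2) *\<^sub>R (X + transpose X) \<in> Symm" "(1/2) *\<^sub>R (X - transpose X) \<in> Anti"
      using rows_cols by (simp_all add: Symm_iff Anti_iff transpose_entry field_simps)
    moreover have "X = (1/2) *\<^sub>R (X + transpose X) + (1/2) *\<^sub>R (X - transpose X)"
      by (simp add: vec_eq_iff field_simps)
    ultimately show "X \<in> setsum_sp Symm Anti" unfolding setsum_sp_def by blast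
  qed
  show "setsum_sp Symm Anti \<subseteq> (DS :: (real^'n^'n) set)"
    using Symm_imp_DS Anti_imp_DS by (intro setsum_sp_subset[OF subspace_DS]) auto
qed

definition EI_mat :: "('n::finite \<Rightarrow> real) \<Rightarrow> real^'n^'n" where
  "EI_mat v = (\<chi> i j. v j - (if i = j then sum v UNIV else 0))"

lemma EI_mat_entry: "EI_mat v $ i $ j = v j - (if i = j then sum v UNIV else 0)"
  by (simp add: EI_mat_def)

lemma EI_mat_eq_sum_Rmat: "EI_mat v = (\<Sum>i\<in>UNIV. v i *\<^sub>R Rmat i)"
proof -
  have "(\<Sum>i\<in>UNIV. v i *\<^sub>R Rmat i) $ a $ b
      = (\<Sum>i\<in>UNIV. (if b = i then v i else 0) - (if a = b then v i else 0))" for a b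
    unfolding sum_component by (intro sum.cong refl) (auto simp: Rmat_def)
  then show ?thesis by (simp add: vec_eq_iff EI_mat_entry sum_subtractf)
qed

lemma EI_eq_range_EI_mat: "(EI :: (real^'n::finite^'n) set) = range EI_mat"
proof
  have "subspace (range (EI_mat :: ('n \<Rightarrow> real) \<Rightarrow> real^'n^'n))"
    unfolding subspace_def EI_mat_eq_sum_Rmat
  proof (intro conjI ballI allI)
    show "0 \<in> range (\<lambda>v. \<Sum>i\<in>UNIV. v i *\<^sub>R Rmat i)" by (intro image_eqI[of _ _ "\<lambda>_. 0"]) simp_all
  next
    fix x y :: "real^'n^'n" assume "x \<in> range (\<lambda>v. \<Sum>i\<in>UNIV. v i *\<^sub>R Rmat i)" "y \<in> range (\<lambda>v. \<Sum>i\<in>UNIV. v i *\<^sub>R Rmat i)"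
    then show "x + y \<in> range (\<lambda>v. \<Sum>i\<in>UNIV. v i *\<^sub>R Rmat i)"
      by (auto intro!: image_eqI[of _ _ "\<lambda>i. _ i + _ i"] simp: scaleR_add_left sum.distrib)
  next
    fix c :: real and x :: "real^'n^'n" assume "x \<in> range (\<lambda>v. \<Sum>i\<in>UNIV. v i *\<^sub>R Rmat i)"
    then show "c *\<^sub>R x \<in> range (\<lambda>v. \<Sum>i\<in>UNIV. v i *\<^sub>R Rmat i)"
      by (auto intro!: image_eqI[of _ _ "\<lambda>i. c * _ i"] simp: scaleR_sum_right)
  qed
  moreover have "Rmat i \<in> range EI_mat" for i
  proof (intro image_eqI[of _ _ "\<lambda>k. if k = i then 1 else 0"])
    show "Rmat i = EI_mat (\<lambda>k. if k = i then 1 else 0)"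
      unfolding EI_mat_eq_sum_Rmat by (simp add: if_distrib[of "\<lambda>x. x *\<^sub>R _"] cong: if_cong)
  qed simp
  ultimately show "(EI :: (real^'n^'n) set) \<subseteq> range EI_mat"
    unfolding EI_def by (intro span_minimal) auto
  show "range EI_mat \<subseteq> (EI :: (real^'n^'n) set)"
    unfolding EI_def EI_mat_eq_sum_Rmat by (auto intro!: span_sum span_scale simp: span_base)
qed

lemma subspace_EI: "subspace EI"
  unfolding EI_def by (rule subspace_span)

lemma EI_decomp:
  assumes "CARD('n::finite) \<ge> 2"
  shows "(EI :: (real^'n^'n) set) = setsum_sp triv_comp col_comp"
proof
  let ?N = "real CARD('n)"
  show "(EI :: (real^'n^'n) set) \<subseteq> setsum_sp triv_comp col_comp"
  proof
    fix X :: "real^'n^'n" assume "X \<in> EI"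
    then obtain v where v: "X = EI_mat v" by (auto simp: EI_eq_range_EI_mat)
    define m where "m = sum v UNIV / ?N"
    have "sum (\<lambda>j. v j - m) UNIV = 0" by (simp add: m_def sum_subtractf)
    moreover have "X = m *\<^sub>R J_minus_nI + col_mat (\<lambda>j. v j - m)"
      by (simp add: v vec_eq_iff EI_mat_entry J_minus_nI_entry col_mat_entry m_def field_simps)
    ultimately show "X \<in> setsum_sp triv_comp col_comp"
      unfolding setsum_sp_def triv_comp_def col_comp_def by blast
  qed
  have "(J_minus_nI :: real^'n^'n) = EI_mat (\<lambda>_. 1)"
    by (simp add: vec_eq_iff EI_mat_entry J_minus_nI_entry)
  then have "(J_minus_nI :: real^'n^'n) \<in> EI" by (simp add: EI_eq_range_EI_mat)
  then have triv: "triv_comp \<subseteq> (EI :: (real^'n^'n) set)"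
    unfolding triv_comp_def using subspace_scale[OF subspace_EI] by blast
  have "col_mat u \<in> (EI :: (real^'n^'n) set)" if "sum u UNIV = 0" for u :: "'n \<Rightarrow> real"
  proof -
    have "col_mat u = EI_mat u" using that by (simp add: vec_eq_iff EI_mat_entry col_mat_entry)
    then show ?thesis by (simp add: EI_eq_range_EI_mat)
  qed
  then have "col_comp \<subseteq> (EI :: (real^'n^'n) set)" unfolding col_comp_def by blast
  with triv show "setsum_sp triv_comp col_comp \<subseteq> (EI :: (real^'n^'n) set)"
    by (intro setsum_sp_subset[OF subspace_EI])
qed

lemma EI_plus_Symm_eq:
  assumes "CARD('n::finite) \<ge> 2"
  shows "setsum_sp EI Symm = setsum_sp col_comp (Symm :: (real^'n^'n) set)"
proof -
  have "setsum_sp EI Symm = setsum_sp col_comp (setsum_sp triv_comp (Symm :: (real^'n^'n) set))"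
    using assms by (simp add: EI_decomp setsum_sp_left_commute flip: setsum_sp_assoc)
  also have "setsum_sp triv_comp (Symm :: (real^'n^'n) set) = Symm"
    by (rule setsum_sp_absorb[OF subspace_Symm subspace_triv_comp triv_comp_Symm])
  finally show ?thesis .
qed

lemma trace_zero_subsets:
  "sym_std_comp \<subseteq> {X :: real^'n::finite^'n. trace X = 0}"
  "col_comp \<subseteq> {X :: real^'n::finite^'n. trace X = 0}"
  "hollow_Symm \<subseteq> {X :: real^'n::finite^'n. trace X = 0}"
  "Anti \<subseteq> {X :: real^'n::finite^'n. trace X = 0}"
  by (auto simp: sym_std_comp_def col_comp_def trace_sym_std_mat trace_col_mat trace_hollow_Symm
      trace_Anti)

lemma isoDecomp_EI:
  assumes card: "CARD('n::finite) \<ge> 2"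
  shows "isoDecomp (EI :: (real^'n^'n) set) [[CARD('n)], [CARD('n) - 1, 1]]"
proof -
  have "triv_comp \<inter> col_comp \<subseteq> {0 :: real^'n^'n}"
    using trace_zero_subsets by (intro triv_comp_Int_trace_zero card)
  then show ?thesis
    unfolding EI_decomp[OF card]
    by (intro isoDecomp_Cons isoDecomp_single spechtIso_triv_comp spechtIso_col_comp card)
qed

lemma isoDecomp_Symm:
  assumes "CARD('n::finite) \<ge> 4"
  shows "isoDecomp (Symm :: (real^'n^'n) set) [[CARD('n)], [CARD('n) - 1, 1], [CARD('n) - 2, 2]]"
proof -
  have card: "CARD('n) \<ge> 2" "CARD('n) \<ge> 3" using assms by simp_all
  have "sym_std_comp \<inter> hollow_Symm \<subseteq> {0 :: real^'n^'n}"
    using card by (intro sym_std_comp_Int_zero_diag) (auto simp: hollow_Symm_def)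
  moreover have "triv_comp \<inter> setsum_sp sym_std_comp hollow_Symm \<subseteq> {0 :: real^'n^'n}"
    using trace_zero_subsets
    by (intro triv_comp_Int_trace_zero card(1) setsum_sp_subset[OF subspace_trace_zero])
  ultimately show ?thesis
    unfolding Symm_decomp[OF card(2)]
    by (intro isoDecomp_Cons isoDecomp_single spechtIso_triv_comp spechtIso_sym_std_comp
        spechtIso_hollow_Symm card assms)
qed

lemma isoDecomp_Anti:
  assumes "CARD('n::finite) \<ge> 3"
  shows "isoDecomp (Anti :: (real^'n^'n) set) [[CARD('n) - 2, 1, 1]]"
  by (intro isoDecomp_single spechtIso_Anti assms)

lemma isoDecomp_DS:
  assumes "CARD('n::finite) \<ge> 4"
  shows "isoDecomp (DS :: (real^'n^'n) set)
    [[CARD('n)], [CARD('n) - 1, 1], [CARD('n) - 2, 2], [CARD('n) - 2, 1, 1]]"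
proof -
  have card: "CARD('n) \<ge> 2" "CARD('n) \<ge> 3" using assms by simp_all
  have eq: "(DS :: (real^'n^'n) set)
      = setsum_sp triv_comp (setsum_sp sym_std_comp (setsum_sp hollow_Symm Anti))"
    by (simp add: DS_eq_Symm_plus_Anti Symm_decomp[OF card(2)] flip: setsum_sp_assoc)
  have "hollow_Symm \<inter> Anti \<subseteq> {0 :: real^'n^'n}"
    using Symm_Int_Anti hollow_Symm_subset_Symm by blast
  moreover have "sym_std_comp \<inter> setsum_sp hollow_Symm Anti \<subseteq> {0 :: real^'n^'n}"
    using card AntiD(3)
    by (intro sym_std_comp_Int_zero_diag setsum_sp_subset[OF subspace_zero_diag])
      (auto simp: hollow_Symm_def)
  moreover have "triv_comp \<inter> setsum_sp sym_std_comp (setsum_sp hollow_Symm Anti) \<subseteq> {0 :: real^'n^'n}"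
    using trace_zero_subsets
    by (intro triv_comp_Int_trace_zero card(1) setsum_sp_subset[OF subspace_trace_zero])
  ultimately show ?thesis
    unfolding eq
    by (intro isoDecomp_Cons isoDecomp_single spechtIso_triv_comp spechtIso_sym_std_comp
        spechtIso_hollow_Symm spechtIso_Anti card assms)
qed

lemma isoDecomp_EI_plus_Symm:
  assumes "CARD('n::finite) \<ge> 4"
  shows "isoDecomp (setsum_sp EI (Symm :: (real^'n^'n) set))
    [[CARD('n)], [CARD('n) - 1, 1], [CARD('n) - 1, 1], [CARD('n) - 2, 2]]"
proof -
  have card: "CARD('n) \<ge> 2" "CARD('n) \<ge> 3" using assms by simp_all
  have "setsum_sp EI (Symm :: (real^'n^'n) set) = setsum_sp col_comp Symm"
    by (rule EI_plus_Symm_eq[OF card(1)])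
  also have "\<dots> = setsum_sp col_comp (setsum_sp triv_comp (setsum_sp sym_std_comp hollow_Symm))"
    by (simp only: Symm_decomp[OF card(2)])
  also have "\<dots> = setsum_sp triv_comp (setsum_sp col_comp (setsum_sp sym_std_comp hollow_Symm))"
    by (rule setsum_sp_left_commute)
  finally have eq: "setsum_sp EI (Symm :: (real^'n^'n) set)
      = setsum_sp triv_comp (setsum_sp col_comp (setsum_sp sym_std_comp hollow_Symm))" .
  have "sym_std_comp \<inter> hollow_Symm \<subseteq> {0 :: real^'n^'n}"
    using card by (intro sym_std_comp_Int_zero_diag) (auto simp: hollow_Symm_def)
  moreover have "setsum_sp sym_std_comp hollow_Symm \<subseteq> (Symm :: (real^'n^'n) set)"
    using sym_std_mat_Symm hollow_Symm_subset_Symm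
    by (intro setsum_sp_subset[OF subspace_Symm]) (auto simp: sym_std_comp_def)
  then have "col_comp \<inter> setsum_sp sym_std_comp hollow_Symm \<subseteq> {0 :: real^'n^'n}"
    using col_comp_Int_Symm by blast
  moreover have "triv_comp \<inter> setsum_sp col_comp (setsum_sp sym_std_comp hollow_Symm) \<subseteq> {0 :: real^'n^'n}"
    using trace_zero_subsets
    by (intro triv_comp_Int_trace_zero card(1) setsum_sp_subset[OF subspace_trace_zero])
  ultimately show ?thesis
    unfolding eq
    by (intro isoDecomp_Cons isoDecomp_single spechtIso_triv_comp spechtIso_col_comp
        spechtIso_sym_std_comp spechtIso_hollow_Symm card assms)
qed

section \<open>Closure under products\<close>

lemma EI_mat_mult: "EI_mat v ** EI_mat w = (- sum w UNIV) *\<^sub>R (EI_mat v :: real^'n::finite^'n)"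
proof -
  let ?s = "sum v UNIV" and ?t = "sum w UNIV"
  have "(EI_mat v ** EI_mat w) $ i $ j = ((- ?t) *\<^sub>R EI_mat v) $ i $ j" for i j
  proof -
    have "(EI_mat v ** EI_mat w) $ i $ j = (\<Sum>k\<in>UNIV. v k * w j - (if k = j then v k * ?t else 0)
          - (if k = i then ?s * w j else 0) + (if k = i then (if k = j then ?s * ?t else 0) else 0))"
      unfolding matrix_mult_entry EI_mat_entry by (intro sum.cong refl) (auto simp: algebra_simps)
    also have "\<dots> = ?s * w j - v j * ?t - ?s * w j + (if i = j then ?s * ?t else 0)"
      by (simp add: sum.distrib sum_subtractf sum_distrib_right[symmetric])
    also have "\<dots> = ((- ?t) *\<^sub>R EI_mat v) $ i $ j" by (simp add: EI_mat_entry algebra_simps)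
    finally show ?thesis .
  qed
  then show ?thesis by (simp add: vec_eq_iff)
qed

lemma scaleR_EI_mat: "c *\<^sub>R EI_mat v = EI_mat (\<lambda>i. c * v i)"
  by (simp add: vec_eq_iff EI_mat_entry sum_distrib_left algebra_simps)

lemma mat_algebra_EI: "mat_algebra (EI :: (real^'n::finite^'n) set)"
  unfolding mat_algebra_def EI_eq_range_EI_mat
proof (intro ballI)
  fix A B :: "real^'n^'n" assume "A \<in> range EI_mat" "B \<in> range EI_mat"
  then obtain v w where "A = EI_mat v" "B = EI_mat w" by blast
  then have "A ** B = EI_mat (\<lambda>i. - sum w UNIV * v i)"
    by (simp only: EI_mat_mult scaleR_EI_mat)
  then show "A ** B \<in> range EI_mat" by blast
qed

lemma DS_mult: "A \<in> DS \<Longrightarrow> B \<in> DS \<Longrightarrow> A ** B \<in> DS"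
proof -
  have "(\<Sum>j\<in>UNIV. (A ** B) $ i $ j) = (\<Sum>k\<in>UNIV. A $ i $ k * (\<Sum>j\<in>UNIV. B $ k $ j))"
    "(\<Sum>i\<in>UNIV. (A ** B) $ i $ j) = (\<Sum>k\<in>UNIV. (\<Sum>i\<in>UNIV. A $ i $ k) * B $ k $ j)" for i j
    unfolding matrix_mult_entry by (subst sum.swap, simp add: sum_distrib_left sum_distrib_right)+
  then show "A \<in> DS \<Longrightarrow> B \<in> DS \<Longrightarrow> A ** B \<in> DS" by (simp add: DS_iff)
qed

lemma mat_algebra_DS: "mat_algebra (DS :: (real^'n::finite^'n) set)"
  unfolding mat_algebra_def using DS_mult by blast

lemma transpose_matrix_mult: "transpose (A ** B) = transpose B ** transpose (A :: real^'n::finite^'n)"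
  by (simp add: vec_eq_iff matrix_mult_entry transpose_entry mult.commute)

lemma jordan_alg_Symm: "jordan_alg (Symm :: (real^'n::finite^'n) set)"
  unfolding jordan_alg_def
proof (intro ballI)
  fix A B :: "real^'n^'n" assume "A \<in> Symm" "B \<in> Symm"
  then have "A \<in> DS" "B \<in> DS" "transpose A = A" "transpose B = B" by (auto simp: Symm_def)
  moreover from this(1,2) have "A ** B + B ** A \<in> DS"
    by (intro subspace_add[OF subspace_DS] DS_mult)
  ultimately show "A ** B + B ** A \<in> Symm"
    by (simp add: Symm_def transpose_zero_add_diff transpose_matrix_mult add.commute)
qed

lemma lie_alg_Anti: "lie_alg (Anti :: (real^'n::finite^'n) set)"
  unfolding lie_alg_def
proof (intro ballI)
  fix A B :: "real^'n^'n" assume "A \<in> Anti" "B \<in> Anti"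
  then have "A \<in> DS" "B \<in> DS" "transpose A = - A" "transpose B = - B" by (auto simp: Anti_def)
  moreover from this(1,2) have "A ** B - B ** A \<in> DS"
    by (intro subspace_diff[OF subspace_DS] DS_mult)
  moreover have "transpose (A ** B - B ** A) = transpose B ** transpose A - transpose A ** transpose B"
    by (simp add: transpose_zero_add_diff transpose_matrix_mult)
  moreover have "(- X) ** (- Y) = X ** Y" for X Y :: "real^'n^'n"
    by (simp add: vec_eq_iff matrix_mult_entry)
  ultimately show "A ** B - B ** A \<in> Anti" by (simp add: Anti_def)
qed

lemma not_jordan_alg_Anti:
  assumes "CARD('n::finite) \<ge> 3"
  shows "\<not> jordan_alg (Anti :: (real^'n^'n) set)"
proof -
  obtain p q r :: 'n where d: "p \<noteq> q" "p \<noteq> r" "q \<noteq> r"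
    using exists_three_distinct[OF assms] .
  let ?A = "skew_triangle r p q :: real^'n^'n"
  have "(?A ** ?A) $ p $ p = (\<Sum>k\<in>UNIV. (if k = q then -1 else 0) + (if k = r then -1 else 0))"
    unfolding matrix_mult_entry using d
    by (intro sum.cong refl) (auto simp: skew_triangle_entry skew_unit_entry)
  then have "(?A ** ?A + ?A ** ?A) $ p $ p \<noteq> 0" using d by (simp add: sum.distrib)
  then have "?A ** ?A + ?A ** ?A \<notin> Anti" using AntiD(3) by blast
  then show ?thesis using skew_triangle_Anti unfolding jordan_alg_def by blast
qed

lemma EI_plus_Symm_iff:
  fixes X :: "real^'n::finite^'n"
  assumes "CARD('n) \<ge> 2"
  shows "X \<in> setsum_sp EI (Symm :: (real^'n^'n) set)
    \<longleftrightarrow> (\<exists>u S. sum u UNIV = 0 \<and> S \<in> Symm \<and> X = col_mat u + S)"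
  unfolding EI_plus_Symm_eq[OF assms] unfolding setsum_sp_def col_comp_def by blast

lemma Symm_subset_EI_plus_Symm: "Symm \<subseteq> setsum_sp EI (Symm :: (real^'n::finite^'n) set)"
  using subspace_0[OF subspace_EI] unfolding setsum_sp_def by force

lemma matrix_add_rdistrib: "(A + B) ** C = A ** C + B ** (C :: real^'n::finite^'n)"
  by (simp add: vec_eq_iff matrix_mult_entry distrib_right sum.distrib)

lemma col_mat_mult_left: "col_mat u ** T = col_mat (\<lambda>j. \<Sum>k\<in>UNIV. u k * T $ k $ j)"
  by (simp add: vec_eq_iff matrix_mult_entry col_mat_entry)

lemma row_sum_zero_mult_col_mat:
  "(\<And>i. (\<Sum>j\<in>UNIV. S $ i $ j) = 0) \<Longrightarrow> S ** col_mat w = (0 :: real^'n::finite^'n)"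
  by (simp add: vec_eq_iff matrix_mult_entry col_mat_entry sum_distrib_right[symmetric])

lemma jordan_alg_EI_plus_Symm:
  assumes card: "CARD('n::finite) \<ge> 2"
  shows "jordan_alg (setsum_sp EI (Symm :: (real^'n^'n) set))"
  unfolding jordan_alg_def
proof (intro ballI)
  fix X Y :: "real^'n^'n" assume "X \<in> setsum_sp EI Symm" "Y \<in> setsum_sp EI Symm"
  then obtain u S w T where h: "sum u UNIV = 0" "S \<in> Symm" "X = col_mat u + S"
    "sum w UNIV = 0" "T \<in> Symm" "Y = col_mat w + T"
    unfolding EI_plus_Symm_iff[OF card] by blast
  let ?v = "\<lambda>j. (\<Sum>k\<in>UNIV. u k * T $ k $ j) + (\<Sum>k\<in>UNIV. w k * S $ k $ j)"
  have "col_mat u ** col_mat w = (0 :: real^'n^'n)" "col_mat w ** col_mat u = (0 :: real^'n^'n)"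
    using h(1,4) by (simp_all add: row_sum_zero_mult_col_mat col_mat_entry)
  moreover have "S ** col_mat w = 0" "T ** col_mat u = 0"
    using SymmD(1)[OF h(2)] SymmD(1)[OF h(5)] by (simp_all add: row_sum_zero_mult_col_mat)
  ultimately have "X ** Y + Y ** X
      = col_mat (\<lambda>j. \<Sum>k\<in>UNIV. u k * T $ k $ j) + col_mat (\<lambda>j. \<Sum>k\<in>UNIV. w k * S $ k $ j)
        + (S ** T + T ** S)"
    by (simp add: h(3,6) matrix_add_ldistrib matrix_add_rdistrib col_mat_mult_left algebra_simps)
  also have "\<dots> = col_mat ?v + (S ** T + T ** S)"
    by (simp add: col_mat_def vec_eq_iff)
  finally have "X ** Y + Y ** X = col_mat ?v + (S ** T + T ** S)" .
  moreover have "sum ?v UNIV = 0"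
    using SymmD(1)[OF h(5)] SymmD(1)[OF h(2)]
    by (simp add: sum.distrib sum.swap[of _ UNIV] sum_distrib_left[symmetric])
  moreover have "S ** T + T ** S \<in> Symm" using jordan_alg_Symm h(2,5) unfolding jordan_alg_def by blast
  ultimately show "X ** Y + Y ** X \<in> setsum_sp EI Symm"
    unfolding EI_plus_Symm_iff[OF card] by blast
qed

definition cyclic_skew_sum :: "real^'n^'n \<Rightarrow> 'n \<Rightarrow> 'n \<Rightarrow> 'n \<Rightarrow> real" where
  "cyclic_skew_sum M p q r = (M $ p $ q - M $ q $ p) + (M $ q $ r - M $ r $ q) + (M $ r $ p - M $ p $ r)"

lemma cyclic_skew_sum_EI_plus_Symm:
  assumes "CARD('n::finite) \<ge> 2" "(M :: real^'n^'n) \<in> setsum_sp EI Symm"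
  shows "cyclic_skew_sum M p q r = 0"
proof -
  obtain u S where S: "S \<in> Symm" and M: "M = col_mat u + S"
    using assms unfolding EI_plus_Symm_iff[OF assms(1)] by blast
  show ?thesis
    unfolding cyclic_skew_sum_def M
    using SymmD(2)[OF S, of p q] SymmD(2)[OF S, of q r] SymmD(2)[OF S, of r p]
    by (simp add: col_mat_entry)
qed

definition diff_outer :: "'n::finite \<Rightarrow> 'n \<Rightarrow> real^'n^'n" where
  "diff_outer p q = (\<chi> i j. diff_vec p q i * diff_vec p q j)"

lemma diff_outer_Symm: "diff_outer p q \<in> Symm"
  using sum_diff_vec[of p q] by (simp add: Symm_iff diff_outer_def sum_distrib_left[symmetric])

lemma rank_one_mult:
  "(\<chi> i j. a i * b j) ** (\<chi> i j. c i * d j) = (\<chi> i j. a i * (\<Sum>k\<in>UNIV. b k * c k) * d j :: real^'n::finite^'n)"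
  by (simp add: vec_eq_iff matrix_mult_entry sum_distrib_left sum_distrib_right algebra_simps)

lemma not_lie_alg_EI_plus_Symm_Symm:
  assumes card: "CARD('n::finite) \<ge> 3"
  shows "\<not> lie_alg (setsum_sp EI (Symm :: (real^'n^'n) set)) \<and> \<not> lie_alg (Symm :: (real^'n^'n) set)"
proof -
  obtain p q r :: 'n where d: "p \<noteq> q" "p \<noteq> r" "q \<noteq> r"
    using exists_three_distinct[OF card] .
  let ?A = "diff_outer p q" and ?B = "diff_outer q r"
  have dot: "(\<Sum>k\<in>UNIV. diff_vec p q k * diff_vec q r k) = -1"
  proof -
    have "(\<Sum>k\<in>UNIV. diff_vec p q k * diff_vec q r k) = (\<Sum>k\<in>UNIV. if k = q then -1 else 0)"
      using d by (intro sum.cong refl) (auto simp: diff_vec_def)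
    then show ?thesis by simp
  qed
  have "(?A ** ?B - ?B ** ?A) $ i $ j = - (diff_vec p q i * diff_vec q r j) + diff_vec q r i * diff_vec p q j"
    for i j
    using dot dot[unfolded mult.commute[of "diff_vec p q _"]]
    by (simp add: diff_outer_def rank_one_mult)
  then have "cyclic_skew_sum (?A ** ?B - ?B ** ?A) p q r \<noteq> 0"
    unfolding cyclic_skew_sum_def using d by (simp add: diff_vec_def)
  moreover have "CARD('n) \<ge> 2" using card by simp
  ultimately have "?A ** ?B - ?B ** ?A \<notin> setsum_sp EI Symm"
    using cyclic_skew_sum_EI_plus_Symm by blast
  with Symm_subset_EI_plus_Symm diff_outer_Symm show ?thesis
    unfolding lie_alg_def by blast
qed

theorem mainTheorem11:
  assumes "CARD('n::finite) \<ge> 4"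
  shows "let n = CARD('n) in
     (isoDecomp (EI :: (real^'n^'n) set) [[n], [n - 1, 1]] \<and> mat_algebra (EI :: (real^'n^'n) set))
   \<and> (isoDecomp (DS :: (real^'n^'n) set) [[n], [n - 1, 1], [n - 2, 2], [n - 2, 1, 1]]
        \<and> mat_algebra (DS :: (real^'n^'n) set))
   \<and> (isoDecomp (Symm :: (real^'n^'n) set) [[n], [n - 1, 1], [n - 2, 2]]
        \<and> jordan_alg (Symm :: (real^'n^'n) set) \<and> \<not> lie_alg (Symm :: (real^'n^'n) set))
   \<and> (isoDecomp (Anti :: (real^'n^'n) set) [[n - 2, 1, 1]]
        \<and> lie_alg (Anti :: (real^'n^'n) set) \<and> \<not> jordan_alg (Anti :: (real^'n^'n) set))
   \<and> (isoDecomp (setsum_sp (EI :: (real^'n^'n) set) Symm) [[n], [n - 1, 1], [n - 1, 1], [n - 2, 2]]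
        \<and> jordan_alg (setsum_sp (EI :: (real^'n^'n) set) Symm)
        \<and> \<not> lie_alg (setsum_sp (EI :: (real^'n^'n) set) Symm))"
proof -
  have card: "CARD('n) \<ge> 2" "CARD('n) \<ge> 3" using assms by simp_all
  show ?thesis
    unfolding Let_def
    using isoDecomp_EI[OF card(1)] mat_algebra_EI isoDecomp_DS[OF assms] mat_algebra_DS
      isoDecomp_Symm[OF assms] jordan_alg_Symm isoDecomp_Anti[OF card(2)] lie_alg_Anti
      not_jordan_alg_Anti[OF card(2)] isoDecomp_EI_plus_Symm[OF assms]
      jordan_alg_EI_plus_Symm[OF card(1)] not_lie_alg_EI_plus_Symm_Symm[OF card(2)]
    by blast
qed

end
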